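(* For every integer $n>2$ and every automorphism $\varphi\in\mathrm{Aut}(F)$, $(\varphi(r_1),\varphi(r_2))\sim_{AC}(r_1,r_2)$, where $(r_1,r_2)=\mathrm{AK}(n)=(xyxy^{-1}x^{-1}y^{-1},\ x^ny^{-(n+1)})$.
   Context: $F=F(x,y)$ is the free group on $\{x,y\}$. The Akbulut–Kurby pair is $\mathrm{AK}(n)=(xyxy^{-1}x^{-1}y^{-1},\ x^{n}y^{-(n+1)})$, i.e. the presentation $\langle x,y\mid xyx=yxy,\ x^n=y^{n+1}\rangle$ of the trivial group. The Andrews–Curtis (AC) moves on a pair $(r_1,r_2)\in F^2$ are: replace $r_i$ by $r_ir_j$ ($i\ne j$); replace $r_i$ by $r_i^{-1}$; replace $r_i$ by $w^{-1}r_iw$ for some $w\in F$. Two pairs are AC-equivalent, $\sim_{AC}$, if one can be obtained from the other by a finite sequence of AC-moves. *)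

theory Defs
  imports "HOL-Algebra.Group"
begin

text \<open>The free group F(x,y), realised as reduced words. A letter is a pair
  (inverted, generator): generator False = x, True = y; inverted True means the
  inverse of that generator.\<close>

type_synonym letter = "bool \<times> bool"

definition gx :: letter where "gx = (False, False)"
definition gy :: letter where "gy = (False, True)"

definition inv_letter :: "letter \<Rightarrow> letter" where
  "inv_letter a = (\<not> fst a, snd a)"

fun reduced :: "letter list \<Rightarrow> bool" where
  "reduced [] = True"
| "reduced [a] = True"
| "reduced (a # b # w) = (b \<noteq> inv_letter a \<and> reduced (b # w))"

fun cancel1 :: "letter \<Rightarrow> letter list \<Rightarrow> letter list" where
  "cancel1 a [] = [a]"
| "cancel1 a (b # w) = (if b = inv_letter a then w else a # b # w)"

fun reduce :: "letter list \<Rightarrow> letter list" where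
  "reduce [] = []"
| "reduce (a # w) = cancel1 a (reduce w)"

definition fmult :: "letter list \<Rightarrow> letter list \<Rightarrow> letter list" where
  "fmult u v = reduce (u @ v)"

definition finv :: "letter list \<Rightarrow> letter list" where
  "finv w = rev (map inv_letter w)"

definition free_group :: "letter list monoid" where
  "free_group = \<lparr>carrier = {w. reduced w}, monoid.mult = fmult, one = []\<rparr>"

definition Aut_F :: "(letter list \<Rightarrow> letter list) set" where
  "Aut_F = iso free_group free_group"

inductive AC_move :: "letter list \<times> letter list \<Rightarrow> letter list \<times> letter list \<Rightarrow> bool" where
  mult1: "AC_move (r1, r2) (fmult r1 r2, r2)"
| mult2: "AC_move (r1, r2) (r1, fmult r2 r1)"
| inv1: "AC_move (r1, r2) (finv r1, r2)"
| inv2: "AC_move (r1, r2) (r1, finv r2)"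
| conj1: "reduced w \<Longrightarrow> AC_move (r1, r2) (fmult (finv w) (fmult r1 w), r2)"
| conj2: "reduced w \<Longrightarrow> AC_move (r1, r2) (r1, fmult (finv w) (fmult r2 w))"

definition AC_equiv :: "letter list \<times> letter list \<Rightarrow> letter list \<times> letter list \<Rightarrow> bool" where
  "AC_equiv p q = AC_move\<^sup>*\<^sup>* p q"

definition AK :: "nat \<Rightarrow> letter list \<times> letter list" where
  "AK n = ([gx, gy, gx, inv_letter gy, inv_letter gx, inv_letter gy],
           replicate n gx @ replicate (n + 1) (inv_letter gy))"

end

theory Submission
  imports Defs "HOL-Algebra.Coset" "HOL-Algebra.Generated_Groups"
begin

text \<open>
  An automorphism \<open>\<phi>\<close> of \<open>F\<close> is the substitution \<open>x \<mapsto> u, y \<mapsto> v\<close> for the free basis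
  \<open>(u, v) = (\<phi> x, \<phi> y)\<close>, so \<open>\<phi>(AK(n))\<close> is \<open>AK(n)\<close> written in \<open>u\<close> and \<open>v\<close>. Call \<open>(u, v)\<close>
  AK-invariant if this pair is AC-equivalent to \<open>AK(n)\<close>. The property is preserved by the
  Nielsen moves: by two conjugation moves for simultaneous conjugation, and for the swap and
  the transvection \<open>(u, v) \<mapsto> (u v, v)\<close> by explicit AC-chains valid for all \<open>u, v\<close>, each step
  replacing one relator by a word that, modulo the normal closure of the other relator, is a
  conjugate of it or of its inverse; inversion is a composite of these moves. By Nielsen's
  cancellation argument a free basis of minimal total length in its Nielsen class consists
  of two letters, and such a basis is AK-invariant because \<open>(x, y)\<close> is.
\<close>

section \<open>Reduced words and the free group\<close>

lemma inv_letter_inv[simp]: "inv_letter (inv_letter a) = a"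
  by (cases a) (simp add: inv_letter_def)

lemma inv_letter_neq[simp]: "inv_letter a \<noteq> a" "a \<noteq> inv_letter a"
  by (cases a, simp add: inv_letter_def)+

lemma letter_same_generator: "snd l = snd l' \<Longrightarrow> l' = l \<or> l' = inv_letter l"
  by (cases l; cases l') (auto simp: inv_letter_def)

lemma reduced_Cons: "reduced (a # w) \<longleftrightarrow> reduced w \<and> (w = [] \<or> hd w \<noteq> inv_letter a)"
  by (cases w) auto

lemma reduced_ConsD: "reduced (a # w) \<Longrightarrow> reduced w"
  by (simp add: reduced_Cons)

lemma reduced_cancel1: "reduced w \<Longrightarrow> reduced (cancel1 a w)"
  by (cases w) (auto simp: reduced_Cons)

lemma reduced_reduce[simp]: "reduced (reduce w)"
  by (induction w) (auto intro: reduced_cancel1)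

lemma cancel1_no_cancel: "w = [] \<or> hd w \<noteq> inv_letter a \<Longrightarrow> cancel1 a w = a # w"
  by (cases w) auto

lemma reduce_reduced: "reduced w \<Longrightarrow> reduce w = w"
  by (induction w) (auto simp: reduced_Cons cancel1_no_cancel)

lemma reduce_idem[simp]: "reduce (reduce w) = reduce w"
  using reduce_reduced reduced_reduce by blast

lemma cancel1_cancel1: "reduced w \<Longrightarrow> cancel1 a (cancel1 (inv_letter a) w) = w"
  by (cases w) (auto simp: reduced_Cons cancel1_no_cancel)

lemma reduce_append_right: "reduce (u @ v) = reduce (u @ reduce v)"
  by (induction u) auto

lemma reduce_cancel1: "reduced w \<Longrightarrow> reduce (cancel1 a w @ v) = cancel1 a (reduce (w @ v))"
proof (cases w)
  case (Cons b w')
  assume r: "reduced w"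
  show ?thesis
  proof (cases "b = inv_letter a")
    case True
    then show ?thesis using Cons r
      by (simp add: cancel1_cancel1[of _ "a"])
  qed (use Cons in \<open>auto simp: cancel1_no_cancel\<close>)
qed simp

lemma reduce_append_left: "reduce (reduce u @ v) = reduce (u @ v)"
  by (induction u) (auto simp: reduce_cancel1)

lemma reduce_pair: "reduce (p @ [x, inv_letter x] @ q) = reduce (p @ q)"
proof -
  have "reduce ([x, inv_letter x] @ q) = reduce q"
    using cancel1_cancel1[of "reduce q" x] by simp
  then show ?thesis by (metis reduce_append_right)
qed

lemma length_reduce: "length (reduce w) \<le> length w"
proof (induction w)
  case (Cons a w)
  then show ?case by (cases "reduce w") auto
qed simp

lemma fmult_assoc: "fmult (fmult u v) w = fmult u (fmult v w)"
  unfolding fmult_def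
  by (metis append_assoc reduce_append_left reduce_append_right)

lemma reduced_append:
  "reduced (u @ v) \<longleftrightarrow> reduced u \<and> reduced v \<and> (u = [] \<or> v = [] \<or> hd v \<noteq> inv_letter (last u))"
proof (induction u)
  case (Cons a u)
  then show ?case by (cases u) (auto simp: reduced_Cons)
qed simp

lemma reduced_nth: "reduced a \<Longrightarrow> Suc i < length a \<Longrightarrow> a ! Suc i \<noteq> inv_letter (a ! i)"
proof (induction a arbitrary: i)
  case (Cons x a)
  show ?case
  proof (cases i)
    case 0 then show ?thesis using Cons.prems by (cases a) auto
  next
    case (Suc j) then show ?thesis using Cons reduced_ConsD[OF Cons.prems(1)] by simp
  qed
qed simp

lemma finv_Cons: "finv (a # w) = finv w @ [inv_letter a]"
  by (simp add: finv_def)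

lemma finv_Nil[simp]: "finv [] = []" by (simp add: finv_def)

lemma finv_finv[simp]: "finv (finv w) = w"
  by (simp add: finv_def rev_map comp_def)

lemma length_finv[simp]: "length (finv w) = length w"
  by (simp add: finv_def)

lemma take_finv: "take m (finv a) = finv (drop (length a - m) a)"
  by (simp add: finv_def take_rev drop_map)

lemma reduced_finv[simp]: "reduced w \<Longrightarrow> reduced (finv w)"
proof (induction w)
  case (Cons a w)
  then show ?case
    by (cases w) (auto simp: finv_Cons reduced_append reduced_Cons finv_def last_map last_rev hd_map)
qed simp

lemma reduced_finv_append_self: "reduced (finv d @ d) \<Longrightarrow> d = []"
proof (cases d)
  case (Cons x d')
  assume r: "reduced (finv d @ d)"
  have "finv d @ d = (finv d' @ [inv_letter x]) @ (x # d')" by (simp add: Cons finv_Cons)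
  then have "reduced ((finv d' @ [inv_letter x]) @ (x # d'))" using r by simp
  then show ?thesis by (simp only: reduced_append) simp
qed simp

lemma reduce_finv_append: "reduce (finv w @ w) = []"
proof (induction w)
  case (Cons a w)
  have "reduce (finv (a # w) @ a # w) = reduce (finv w @ reduce ([inv_letter a, a] @ w))"
    by (simp add: finv_Cons) (subst reduce_append_right, simp)
  also have "reduce ([inv_letter a, a] @ w) = reduce w"
    using cancel1_cancel1[of "reduce w" "inv_letter a"] by simp
  finally have "reduce (finv (a # w) @ a # w) = reduce (finv w @ reduce w)" .
  then show ?case using Cons by (simp add: reduce_append_right[symmetric])
qed simp

lemma fmult_reduced[simp]: "reduced (fmult u v)"
  by (simp add: fmult_def)

lemma fmult_append: "reduced (u @ v) \<Longrightarrow> fmult u v = u @ v"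
  by (simp add: fmult_def reduce_reduced)

lemma fmult_Nil1[simp]: "reduced w \<Longrightarrow> fmult [] w = w"
  and fmult_Nil2[simp]: "reduced w \<Longrightarrow> fmult w [] = w"
  by (simp_all add: fmult_def reduce_reduced)

lemma group_free_group: "group free_group"
proof (rule groupI)
  fix x assume "x \<in> carrier free_group"
  then show "\<exists>y\<in>carrier free_group. y \<otimes>\<^bsub>free_group\<^esub> x = \<one>\<^bsub>free_group\<^esub>"
    by (intro bexI[of _ "finv x"]) (auto simp: free_group_def fmult_def reduce_finv_append)
qed (auto simp: free_group_def fmult_assoc)

interpretation F: group free_group by (rule group_free_group)

lemma carrier_F[simp]: "carrier free_group = {w. reduced w}"
  and mult_F[simp]: "x \<otimes>\<^bsub>free_group\<^esub> y = fmult x y"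
  and one_F[simp]: "\<one>\<^bsub>free_group\<^esub> = []"
  by (simp_all add: free_group_def)

lemma inv_F[simp]: "reduced w \<Longrightarrow> inv\<^bsub>free_group\<^esub> w = finv w"
  by (rule F.inv_equality) (auto simp: fmult_def reduce_finv_append)

lemma fmult_finv_left: "reduced w \<Longrightarrow> fmult (finv w) w = []"
  by (simp add: fmult_def reduce_finv_append)

lemma fmult_finv_right: "reduced w \<Longrightarrow> fmult w (finv w) = []"
  using reduce_finv_append[of "finv w"] by (simp add: fmult_def)

lemma fmult_finv_cancel: "reduced w \<Longrightarrow> reduced t \<Longrightarrow> fmult (finv w) (fmult w t) = t"
  by (metis fmult_Nil1 fmult_assoc fmult_finv_left)

lemma fmult_cancel_finv: "reduced w \<Longrightarrow> reduced t \<Longrightarrow> fmult w (fmult (finv w) t) = t"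
  by (metis fmult_Nil1 fmult_assoc fmult_finv_right)

lemma finv_fmult: "reduced a \<Longrightarrow> reduced b \<Longrightarrow> finv (fmult a b) = fmult (finv b) (finv a)"
  using F.inv_mult_group[of a b] by simp

lemma fmult_singleton: "reduced (a # w) \<Longrightarrow> fmult [a] w = a # w"
  by (simp add: fmult_def reduce_reduced del: reduce.simps)

lemma length_fmult_le: "length (fmult a b) \<le> length a + length b"
  using length_reduce[of "a @ b"] by (simp add: fmult_def)

lemma reduced_replicate[simp]: "reduced (replicate k a)"
  by (induction k) (auto simp: reduced_Cons)

lemma pow_replicate: "[a] [^]\<^bsub>free_group\<^esub> (k::nat) = replicate k a"
proof (induction k)
  case (Suc k)
  have "[a] [^]\<^bsub>free_group\<^esub> Suc k = [a] \<otimes>\<^bsub>free_group\<^esub> [a] [^]\<^bsub>free_group\<^esub> k"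
    by (rule F.nat_pow_Suc2) simp
  also have "\<dots> = a # replicate k a"
  proof -
    have "reduced (a # replicate k a)" using reduced_replicate[of "Suc k" a] by simp
    then show ?thesis using Suc by (simp add: fmult_singleton)
  qed
  finally show ?case by simp
qed simp

lemma hom_free_group:
  assumes "h \<in> hom free_group free_group"
  shows "\<And>a b. reduced a \<Longrightarrow> reduced b \<Longrightarrow> h (fmult a b) = fmult (h a) (h b)"
    and "\<And>a. reduced a \<Longrightarrow> h (finv a) = finv (h a)"
    and "\<And>a. reduced a \<Longrightarrow> reduced (h a)"
    and "h [] = []"
proof -
  interpret group_hom free_group free_group h
    using assms by (simp add: group_hom_def group_hom_axioms_def F.is_group)
  show "\<And>a b. reduced a \<Longrightarrow> reduced b \<Longrightarrow> h (fmult a b) = fmult (h a) (h b)"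
    using hom_mult by simp
  show "\<And>a. reduced a \<Longrightarrow> reduced (h a)" using hom_closed by simp
  then show "\<And>a. reduced a \<Longrightarrow> h (finv a) = finv (h a)" using hom_inv by simp
  show "h [] = []" using hom_one by simp
qed

section \<open>Substitution endomorphisms and conjugation\<close>

definition endo_letter :: "letter list \<Rightarrow> letter list \<Rightarrow> letter \<Rightarrow> letter list" where
  "endo_letter u v a = (if fst a then finv (if snd a then v else u) else (if snd a then v else u))"

abbreviation wX :: "letter list" where "wX \<equiv> [gx]"

abbreviation wY :: "letter list" where "wY \<equiv> [gy]"

fun endo :: "letter list \<Rightarrow> letter list \<Rightarrow> letter list \<Rightarrow> letter list" where
  "endo u v [] = []"
| "endo u v (a # w) = fmult (endo_letter u v a) (endo u v w)"

lemma reduced_endo_letter[simp]: "reduced u \<Longrightarrow> reduced v \<Longrightarrow> reduced (endo_letter u v a)"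
  by (simp add: endo_letter_def)

lemma reduced_endo[simp]: "reduced (endo u v w)"
  by (cases w) auto

lemma endo_letter_inv_letter: "endo_letter u v (inv_letter a) = finv (endo_letter u v a)"
  by (simp add: endo_letter_def inv_letter_def)

lemma length_endo_letter: "length (endo_letter u v l) = (if snd l then length v else length u)"
  by (simp add: endo_letter_def)

lemma length_endo_letters:
  "snd l \<noteq> snd l' \<Longrightarrow> length (endo_letter u v l) + length (endo_letter u v l') = length u + length v"
  by (auto simp: length_endo_letter)

lemma endo_append: "reduced u \<Longrightarrow> reduced v \<Longrightarrow> endo u v (w1 @ w2) = fmult (endo u v w1) (endo u v w2)"
  by (induction w1) (auto simp: fmult_assoc)

lemma endo_cancel1: "reduced u \<Longrightarrow> reduced v \<Longrightarrow> endo u v (cancel1 a z) = fmult (endo_letter u v a) (endo u v z)"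
proof (cases z)
  case (Cons b z')
  assume uv: "reduced u" "reduced v"
  then show ?thesis using Cons
    by (auto simp: endo_letter_inv_letter fmult_cancel_finv[symmetric] fmult_assoc[symmetric])
       (metis fmult_assoc fmult_cancel_finv reduced_endo_letter reduced_endo)
qed simp

lemma endo_reduce: "reduced u \<Longrightarrow> reduced v \<Longrightarrow> endo u v (reduce w) = endo u v w"
  by (induction w) (auto simp: endo_cancel1)

lemma endo_fmult: "reduced u \<Longrightarrow> reduced v \<Longrightarrow> endo u v (fmult w1 w2) = fmult (endo u v w1) (endo u v w2)"
  by (simp add: fmult_def endo_reduce endo_append)

lemma endo_finv: "reduced u \<Longrightarrow> reduced v \<Longrightarrow> endo u v (finv w) = finv (endo u v w)"
proof (induction w)
  case (Cons a w)
  then show ?case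
    by (simp add: finv_Cons endo_append endo_letter_inv_letter finv_fmult)
qed simp

lemma endo_hom: "reduced u \<Longrightarrow> reduced v \<Longrightarrow> endo u v \<in> hom free_group free_group"
  by (rule homI) (auto simp: endo_fmult)

lemma endo_letter_gx[simp]: "endo_letter u v gx = u" and endo_letter_gy[simp]: "endo_letter u v gy = v"
  by (simp_all add: endo_letter_def gx_def gy_def)

lemma endo_letter_gens: "endo_letter wX wY a = [a]"
  by (cases a) (auto simp: endo_letter_def gx_def gy_def finv_def inv_letter_def)

lemma endo_gens: "reduced w \<Longrightarrow> endo wX wY w = w"
proof (induction w)
  case (Cons a w)
  then show ?case using reduced_ConsD[OF Cons.prems]
    by (simp add: endo_letter_gens fmult_singleton)
qed simp

lemma endo_endo_letter: "reduced u \<Longrightarrow> reduced v \<Longrightarrow> reduced a \<Longrightarrow> reduced b \<Longrightarrow>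
   endo u v (endo_letter a b l) = endo_letter (endo u v a) (endo u v b) l"
  by (simp add: endo_letter_def endo_finv)

lemma endo_endo: "reduced u \<Longrightarrow> reduced v \<Longrightarrow> reduced a \<Longrightarrow> reduced b \<Longrightarrow>
   endo u v (endo a b w) = endo (endo u v a) (endo u v b) w"
  by (induction w) (auto simp: endo_fmult endo_endo_letter)

lemma hom_eq_endo:
  assumes h: "h \<in> hom free_group free_group" and w: "reduced w"
  shows "h w = endo (h wX) (h wY) w"
  using w
proof (induction w)
  case Nil
  show ?case using hom_free_group(4)[OF h] by simp
next
  case (Cons a w)
  have w: "reduced w" using Cons.prems by (rule reduced_ConsD)
  have "h (a # w) = h (fmult (endo_letter wX wY a) w)"
    using Cons.prems by (simp add: endo_letter_gens fmult_singleton)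
  also have "\<dots> = fmult (endo_letter (h wX) (h wY) a) (h w)"
    using hom_free_group[OF h] w by (simp add: endo_letter_def)
  finally show ?case using Cons.IH[OF w] by simp
qed

definition conjugate :: "letter list \<Rightarrow> letter list \<Rightarrow> letter list" where
  "conjugate g w = fmult (finv g) (fmult w g)"

lemma reduced_conjugate[simp]: "reduced (conjugate g w)" by (simp add: conjugate_def)

lemma conjugate_fmult:
  "reduced g \<Longrightarrow> reduced a \<Longrightarrow> reduced b \<Longrightarrow>
    conjugate g (fmult a b) = fmult (conjugate g a) (conjugate g b)"
  unfolding conjugate_def by (simp add: fmult_assoc fmult_cancel_finv)

lemma conjugate_finv: "reduced g \<Longrightarrow> reduced a \<Longrightarrow> conjugate g (finv a) = finv (conjugate g a)"
  unfolding conjugate_def by (simp add: finv_fmult fmult_assoc)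

lemma conjugate_Nil[simp]: "reduced g \<Longrightarrow> conjugate g [] = []"
  by (simp add: conjugate_def fmult_finv_left)

lemma conjugate_conjugate_finv: "reduced g \<Longrightarrow> reduced t \<Longrightarrow> conjugate g (conjugate (finv g) t) = t"
  unfolding conjugate_def by (simp add: fmult_assoc fmult_finv_cancel fmult_cancel_finv fmult_finv_left fmult_finv_right)

lemma conjugate_finv_conjugate: "reduced g \<Longrightarrow> reduced t \<Longrightarrow> conjugate (finv g) (conjugate g t) = t"
  using conjugate_conjugate_finv[of "finv g" t] by simp

lemma endo_letter_conjugate:
  "reduced g \<Longrightarrow> reduced u \<Longrightarrow> reduced v \<Longrightarrow>
    endo_letter (conjugate g u) (conjugate g v) l = conjugate g (endo_letter u v l)"
  by (simp add: endo_letter_def conjugate_finv)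

lemma endo_conjugate:
  "reduced g \<Longrightarrow> reduced u \<Longrightarrow> reduced v \<Longrightarrow>
    endo (conjugate g u) (conjugate g v) w = conjugate g (endo u v w)"
  by (induction w) (auto simp: endo_letter_conjugate conjugate_fmult)

section \<open>Andrews--Curtis equivalence\<close>

definition reduced_pair :: "letter list \<times> letter list \<Rightarrow> bool" where
  "reduced_pair p \<longleftrightarrow> reduced (fst p) \<and> reduced (snd p)"

lemma reduced_pair_simp[simp]: "reduced_pair (a, b) \<longleftrightarrow> reduced a \<and> reduced b"
  by (simp add: reduced_pair_def)

lemma AC_move_reduced_pair: "AC_move p q \<Longrightarrow> reduced_pair p \<Longrightarrow> reduced_pair q"
  by (induction rule: AC_move.induct) auto

lemma AC_equiv_reduced_pair: "AC_equiv p q \<Longrightarrow> reduced_pair p \<Longrightarrow> reduced_pair q"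
  unfolding AC_equiv_def by (induction rule: rtranclp_induct) (auto dest: AC_move_reduced_pair)

lemma AC_equiv_refl[simp]: "AC_equiv p p"
  by (simp add: AC_equiv_def)

lemma AC_equiv_trans[trans]: "AC_equiv p q \<Longrightarrow> AC_equiv q r \<Longrightarrow> AC_equiv p r"
  unfolding AC_equiv_def by simp

lemma AC_equiv_step: "AC_move p q \<Longrightarrow> AC_equiv q r \<Longrightarrow> AC_equiv p r"
  unfolding AC_equiv_def by (simp add: converse_rtranclp_into_rtranclp)

lemma AC_equiv_move: "AC_move p q \<Longrightarrow> AC_equiv p q"
  unfolding AC_equiv_def by simp

lemma AC_mult1: "c = fmult a b \<Longrightarrow> AC_move (a, b) (c, b)" by (simp add: AC_move.mult1)

lemma AC_mult2: "c = fmult b a \<Longrightarrow> AC_move (a, b) (a, c)" by (simp add: AC_move.mult2)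

lemma AC_inv1: "c = finv a \<Longrightarrow> AC_move (a, b) (c, b)" by (simp add: AC_move.inv1)

lemma AC_inv2: "c = finv b \<Longrightarrow> AC_move (a, b) (a, c)" by (simp add: AC_move.inv2)

lemma AC_conj1: "reduced w \<Longrightarrow> c = conjugate w a \<Longrightarrow> AC_move (a, b) (c, b)"
  by (simp add: AC_move.conj1 conjugate_def)

lemma AC_conj2: "reduced w \<Longrightarrow> c = conjugate w b \<Longrightarrow> AC_move (a, b) (a, c)"
  by (simp add: AC_move.conj2 conjugate_def)

lemma AC_move_sym: "AC_move p q \<Longrightarrow> reduced_pair p \<Longrightarrow> AC_equiv q p"
proof (induction rule: AC_move.induct)
  case (mult1 r1 r2)
  have "AC_equiv (fmult r1 r2, r2) (fmult r1 r2, finv r2)"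
    by (rule AC_equiv_move, rule AC_inv2) simp
  also have "AC_equiv \<dots> (r1, finv r2)"
    by (rule AC_equiv_move, rule AC_mult1) (use mult1 in \<open>simp add: fmult_assoc fmult_finv_right\<close>)
  also have "AC_equiv \<dots> (r1, r2)"
    by (rule AC_equiv_move, rule AC_inv2) simp
  finally show ?case .
next
  case (mult2 r1 r2)
  have "AC_equiv (r1, fmult r2 r1) (finv r1, fmult r2 r1)"
    by (rule AC_equiv_move, rule AC_inv1) simp
  also have "AC_equiv \<dots> (finv r1, r2)"
    by (rule AC_equiv_move, rule AC_mult2) (use mult2 in \<open>simp add: fmult_assoc fmult_finv_right\<close>)
  also have "AC_equiv \<dots> (r1, r2)"
    by (rule AC_equiv_move, rule AC_inv1) simp
  finally show ?case .
next
  case (conj1 w r1 r2)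
  then show ?case
    by (intro AC_equiv_move AC_conj1[of "finv w"]) (auto simp: conjugate_finv_conjugate conjugate_def[symmetric])
next
  case (conj2 w r1 r2)
  then show ?case
    by (intro AC_equiv_move AC_conj2[of "finv w"]) (auto simp: conjugate_finv_conjugate conjugate_def[symmetric])
next
  case (inv1 r1 r2)
  then show ?case by (intro AC_equiv_move AC_inv1) simp
next
  case (inv2 r1 r2)
  then show ?case by (intro AC_equiv_move AC_inv2) simp
qed

lemma AC_equiv_sym: "AC_equiv p q \<Longrightarrow> reduced_pair p \<Longrightarrow> AC_equiv q p"
proof (unfold AC_equiv_def, induction rule: rtranclp_induct)
  case (step y z)
  have "reduced_pair y" using step AC_equiv_reduced_pair AC_equiv_def by metis
  then show ?case using step AC_move_sym[of y z] unfolding AC_equiv_def by simp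
qed simp

lemma AC_move_swap: "AC_move p q \<Longrightarrow> AC_move (prod.swap p) (prod.swap q)"
  by (induction rule: AC_move.induct) (auto intro: AC_move.intros)

lemma AC_equiv_swap: "AC_equiv (a, b) (c, d) \<Longrightarrow> AC_equiv (b, a) (d, c)"
proof -
  have "AC_equiv p q \<Longrightarrow> AC_equiv (prod.swap p) (prod.swap q)" for p q
    unfolding AC_equiv_def
    by (induction rule: rtranclp_induct) (auto intro: rtranclp.rtrancl_into_rtrancl AC_move_swap)
  from this[of "(a,b)" "(c,d)"] show "AC_equiv (a, b) (c, d) \<Longrightarrow> AC_equiv (b, a) (d, c)" by simp
qed

definition normal_closure :: "letter list \<Rightarrow> letter list set" where
  "normal_closure r = generate free_group {conjugate g r | g. reduced g}"

lemma conjugates_subset_carrier: "{conjugate g r | g. reduced g} \<subseteq> carrier free_group" by auto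

lemma reduced_normal_closure: "k \<in> normal_closure r \<Longrightarrow> reduced k"
  using F.generate_in_carrier[OF conjugates_subset_carrier] unfolding normal_closure_def by auto

lemma normal_closure_normal: "normal_closure r \<lhd> free_group"
  unfolding normal_closure_def
proof (rule F.normal_generateI[OF conjugates_subset_carrier])
  fix h g assume "h \<in> {conjugate g r |g. reduced g}" "g \<in> carrier free_group"
  then obtain g' where "reduced g'" "h = conjugate g' r" "reduced g" by auto
  then show "g \<otimes>\<^bsub>free_group\<^esub> h \<otimes>\<^bsub>free_group\<^esub> inv\<^bsub>free_group\<^esub> g \<in> {conjugate g r |g. reduced g}"
    by (auto simp: conjugate_def fmult_assoc finv_fmult intro!: exI[of _ "fmult g' (finv g)"])
qed

lemma in_normal_closure: "reduced r \<Longrightarrow> r \<in> normal_closure r"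
  unfolding normal_closure_def by (rule generate.incl) (auto intro!: exI[of _ "[]"] simp: conjugate_def)

lemma AC_mult_conjugate:
  assumes r: "reduced r1" "reduced r2" "reduced g"
  shows "AC_equiv (r1, r2) (r1, fmult r2 (conjugate g r1))"
proof -
  have "AC_equiv (r1, r2) (r1, conjugate (finv g) r2)"
    by (rule AC_equiv_move, rule AC_conj2) (simp_all add: r)
  also have "AC_equiv \<dots> (r1, fmult (conjugate (finv g) r2) r1)"
    by (rule AC_equiv_move, rule AC_mult2) simp
  also have "AC_equiv \<dots> (r1, fmult r2 (conjugate g r1))"
    by (rule AC_equiv_move, rule AC_conj2[of g]) (simp_all add: r conjugate_fmult conjugate_conjugate_finv)
  finally show ?thesis .
qed

lemma AC_mult_normal_closure:
  assumes r1: "reduced r1" and k: "k \<in> normal_closure r1"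
  shows "reduced r2 \<Longrightarrow> AC_equiv (r1, r2) (r1, fmult r2 k)"
  using k unfolding normal_closure_def
proof (induction k arbitrary: r2 rule: generate.induct)
  case one
  then show ?case by simp
next
  case (incl h)
  then obtain g where "reduced g" "h = conjugate g r1" by auto
  then show ?case using AC_mult_conjugate r1 incl.prems by simp
next
  case (inv h)
  then obtain g where g: "reduced g" "h = conjugate g r1" by auto
  have "AC_equiv (r1, fmult r2 (finv h)) (r1, r2)"
    using AC_mult_conjugate[OF r1 _ g(1), of "fmult r2 (finv h)"] g inv.prems
    by (simp add: fmult_assoc fmult_finv_left)
  then show ?case using AC_equiv_sym r1 inv.prems g by simp
next
  case (eng h1 h2)
  have rh: "reduced h1" "reduced h2"
    using eng.hyps F.generate_in_carrier[OF conjugates_subset_carrier] by auto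
  show ?case using eng.IH(1)[OF eng.prems] eng.IH(2)[of "fmult r2 h1"] rh eng.prems
    by (simp add: fmult_assoc AC_equiv_trans)
qed

lemma AC_equiv_mod_normal_closure:
  assumes r: "reduced r1" "reduced r2" "reduced r2'"
    and H: "\<And>(G :: letter list set monoid) h. group G \<Longrightarrow> h \<in> hom free_group G \<Longrightarrow>
               h r1 = \<one>\<^bsub>G\<^esub> \<Longrightarrow> h r2' = h r2"
  shows "AC_equiv (r1, r2) (r1, r2')"
proof -
  let ?N = "normal_closure r1"
  interpret N: normal ?N free_group by (rule normal_closure_normal)
  have "?N #>\<^bsub>free_group\<^esub> r1 = ?N"
    using N.rcos_const[OF F.is_group in_normal_closure[OF r(1)]] .
  then have "?N #>\<^bsub>free_group\<^esub> r2' = ?N #>\<^bsub>free_group\<^esub> r2"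
    using H[OF N.factorgroup_is_group N.r_coset_hom_Mod] by simp
  moreover have "r2' \<in> ?N #>\<^bsub>free_group\<^esub> r2'"
    using F.rcos_self[OF _ N.subgroup_axioms] r by simp
  ultimately obtain k where k: "k \<in> ?N" "r2' = fmult k r2"
    unfolding r_coset_def by auto
  have rk: "reduced k" using k reduced_normal_closure by simp
  have "conjugate r2 k \<in> ?N"
    using N.inv_op_closed1[of r2 k] k r rk by (simp add: conjugate_def fmult_assoc)
  then have "AC_equiv (r1, r2) (r1, fmult r2 (conjugate r2 k))"
    by (rule AC_mult_normal_closure[OF r(1) _ r(2)])
  moreover have "fmult r2 (conjugate r2 k) = r2'"
    using k r rk by (simp add: conjugate_def fmult_cancel_finv)
  ultimately show ?thesis by simp
qed

lemma AC_second_mod_first: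
  assumes r: "reduced r1" "reduced r2" "reduced r2'" "reduced g"
    and t: "t = conjugate g r2 \<or> t = conjugate g (finv r2)"
    and H: "\<And>(G :: letter list set monoid) h. group G \<Longrightarrow> h \<in> hom free_group G \<Longrightarrow>
               h r1 = \<one>\<^bsub>G\<^esub> \<Longrightarrow> h r2' = h t"
  shows "AC_equiv (r1, r2) (r1, r2')"
proof -
  have "AC_equiv (r1, r2) (r1, t)"
    using t
  proof
    assume "t = conjugate g r2"
    then show ?thesis using r by (intro AC_equiv_move AC_conj2) auto
  next
    assume t': "t = conjugate g (finv r2)"
    have "AC_equiv (r1, r2) (r1, finv r2)" by (rule AC_equiv_move, rule AC_inv2) simp
    also have "AC_equiv \<dots> (r1, t)" using r t' by (intro AC_equiv_move AC_conj2) auto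
    finally show ?thesis .
  qed
  also have "AC_equiv (r1, t) (r1, r2')"
    using t r by (intro AC_equiv_mod_normal_closure H) auto
  finally show ?thesis .
qed

lemma AC_first_mod_second:
  assumes r: "reduced r1" "reduced r2" "reduced r1'" "reduced g"
    and t: "t = conjugate g r1 \<or> t = conjugate g (finv r1)"
    and H: "\<And>(G :: letter list set monoid) h. group G \<Longrightarrow> h \<in> hom free_group G \<Longrightarrow>
               h r2 = \<one>\<^bsub>G\<^esub> \<Longrightarrow> h r1' = h t"
  shows "AC_equiv (r1, r2) (r1', r2)"
  using AC_equiv_swap[OF AC_second_mod_first[OF r(2,1,3,4) t H]] by simp

text \<open>The relators of \<open>AK(n)\<close> and of the AC-chain
  \<open>(R\<^sub>1, R\<^sub>2) \<sim> (R\<^sub>1, S) \<sim> (T, S) \<sim> (T, U) \<sim> (R\<^sub>1', U) \<sim> (R\<^sub>1', R\<^sub>2')\<close> from \<open>AK(n)\<close> to its image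
  under \<open>x \<mapsto> x y\<close>, written in an arbitrary group so that the connecting identities can be
  proved in the quotients of \<open>F\<close> by normal closures.\<close>

definition braid_relator :: "('c,'d) monoid_scheme \<Rightarrow> 'c \<Rightarrow> 'c \<Rightarrow> 'c" where
  "braid_relator G a b = a \<otimes>\<^bsub>G\<^esub> b \<otimes>\<^bsub>G\<^esub> a \<otimes>\<^bsub>G\<^esub> inv\<^bsub>G\<^esub> b \<otimes>\<^bsub>G\<^esub> inv\<^bsub>G\<^esub> a \<otimes>\<^bsub>G\<^esub> inv\<^bsub>G\<^esub> b"

definition power_relator :: "('c,'d) monoid_scheme \<Rightarrow> nat \<Rightarrow> 'c \<Rightarrow> 'c \<Rightarrow> 'c" where
  "power_relator G n a b = a [^]\<^bsub>G\<^esub> (int n) \<otimes>\<^bsub>G\<^esub> b [^]\<^bsub>G\<^esub> (- int n - 1)"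

definition relator_S :: "('c,'d) monoid_scheme \<Rightarrow> nat \<Rightarrow> 'c \<Rightarrow> 'c \<Rightarrow> 'c" where
  "relator_S G n a b = b [^]\<^bsub>G\<^esub> (- int n - 2) \<otimes>\<^bsub>G\<^esub> inv\<^bsub>G\<^esub> a \<otimes>\<^bsub>G\<^esub> b [^]\<^bsub>G\<^esub> (int n - 1)
     \<otimes>\<^bsub>G\<^esub> a \<otimes>\<^bsub>G\<^esub> b \<otimes>\<^bsub>G\<^esub> a"

definition relator_T :: "('c,'d) monoid_scheme \<Rightarrow> nat \<Rightarrow> 'c \<Rightarrow> 'c \<Rightarrow> 'c" where
  "relator_T G n a b = b [^]\<^bsub>G\<^esub> (- int n - 1) \<otimes>\<^bsub>G\<^esub> inv\<^bsub>G\<^esub> a \<otimes>\<^bsub>G\<^esub> b [^]\<^bsub>G\<^esub> (int n) \<otimes>\<^bsub>G\<^esub> a"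

definition relator_U :: "('c,'d) monoid_scheme \<Rightarrow> nat \<Rightarrow> 'c \<Rightarrow> 'c \<Rightarrow> 'c" where
  "relator_U G n a b = b [^]\<^bsub>G\<^esub> (1 - int n) \<otimes>\<^bsub>G\<^esub> a \<otimes>\<^bsub>G\<^esub> inv\<^bsub>G\<^esub> b \<otimes>\<^bsub>G\<^esub> inv\<^bsub>G\<^esub> a
     \<otimes>\<^bsub>G\<^esub> b [^]\<^bsub>G\<^esub> (int n - 1) \<otimes>\<^bsub>G\<^esub> a"

context group
begin

lemma inv_mult_cancel_left: "x \<in> carrier G \<Longrightarrow> z \<in> carrier G \<Longrightarrow> inv x \<otimes> (x \<otimes> z) = z"
  by (simp add: m_assoc[symmetric])

lemma mult_inv_cancel_left: "x \<in> carrier G \<Longrightarrow> z \<in> carrier G \<Longrightarrow> x \<otimes> (inv x \<otimes> z) = z"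
  by (simp add: m_assoc[symmetric])

lemma eq_inv_of_mult_eq_one:
  "x \<in> carrier G \<Longrightarrow> y \<in> carrier G \<Longrightarrow> x \<otimes> y = \<one> \<Longrightarrow> y = inv x"
  by (metis inv_equality inv_inv m_closed r_inv inv_closed)

lemma middle_eq_of_mult_eq_one:
  "x \<in> carrier G \<Longrightarrow> y \<in> carrier G \<Longrightarrow> z \<in> carrier G \<Longrightarrow> x \<otimes> (y \<otimes> z) = \<one> \<Longrightarrow>
    y = inv x \<otimes> inv z"
proof -
  assume xyz: "x \<in> carrier G" "y \<in> carrier G" "z \<in> carrier G" "x \<otimes> (y \<otimes> z) = \<one>"
  then have "y \<otimes> z = inv x" using eq_inv_of_mult_eq_one[of x "y \<otimes> z"] by simp
  then have "y \<otimes> z \<otimes> inv z = inv x \<otimes> inv z" by simp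
  then show ?thesis using xyz by (simp add: m_assoc)
qed

lemma inv_int_pow: "x \<in> carrier G \<Longrightarrow> inv (x [^] (i::int)) = x [^] (- i)"
  by (simp add: int_pow_neg)

lemma int_pow_minus_one: "x \<in> carrier G \<Longrightarrow> x [^] (-1::int) = inv x"
  by (simp add: int_pow_neg)

lemma int_pow_mult_int_pow: "b \<in> carrier G \<Longrightarrow> b [^] (i::int) \<otimes> b [^] (j::int) = b [^] (i + j)"
  by (simp add: int_pow_mult)

lemma int_pow_mult_gen: "b \<in> carrier G \<Longrightarrow> b [^] (i::int) \<otimes> b = b [^] (i + 1)"
  using int_pow_mult_int_pow[of b i 1] by simp

lemma gen_mult_int_pow: "b \<in> carrier G \<Longrightarrow> b \<otimes> b [^] (i::int) = b [^] (1 + i)"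
  using int_pow_mult_int_pow[of b 1 i] by simp

lemma int_pow_mult_inv: "b \<in> carrier G \<Longrightarrow> b [^] (i::int) \<otimes> inv b = b [^] (i - 1)"
  using int_pow_mult_int_pow[of b i "-1"] by (simp add: int_pow_neg)

lemma inv_mult_int_pow: "b \<in> carrier G \<Longrightarrow> inv b \<otimes> b [^] (i::int) = b [^] (i - 1)"
  using int_pow_mult_int_pow[of b "-1" i] by (simp add: int_pow_neg)

lemma int_pow_mult_assoc:
  "b \<in> carrier G \<Longrightarrow> z \<in> carrier G \<Longrightarrow>
    b [^] (i::int) \<otimes> (b [^] (j::int) \<otimes> z) = b [^] (i + j) \<otimes> z"
  by (simp add: int_pow_mult m_assoc)

lemma int_pow_mult_gen_assoc:
  "b \<in> carrier G \<Longrightarrow> z \<in> carrier G \<Longrightarrow>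
    b [^] (i::int) \<otimes> (b \<otimes> z) = b [^] (i + 1) \<otimes> z"
  using int_pow_mult_assoc[of b z i 1] by simp

lemma gen_mult_int_pow_assoc:
  "b \<in> carrier G \<Longrightarrow> z \<in> carrier G \<Longrightarrow>
    b \<otimes> (b [^] (i::int) \<otimes> z) = b [^] (1 + i) \<otimes> z"
  using int_pow_mult_assoc[of b z 1 i] by simp

lemma int_pow_mult_inv_assoc:
  "b \<in> carrier G \<Longrightarrow> z \<in> carrier G \<Longrightarrow>
    b [^] (i::int) \<otimes> (inv b \<otimes> z) = b [^] (i - 1) \<otimes> z"
  using int_pow_mult_assoc[of b z i "-1"] by (simp add: int_pow_neg)

lemma inv_mult_int_pow_assoc:
  "b \<in> carrier G \<Longrightarrow> z \<in> carrier G \<Longrightarrow>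
    inv b \<otimes> (b [^] (i::int) \<otimes> z) = b [^] (i - 1) \<otimes> z"
  using int_pow_mult_assoc[of b z "-1" i] by (simp add: int_pow_neg)

lemmas int_pow_normalize = int_pow_minus_one m_assoc inv_mult_cancel_left mult_inv_cancel_left inv_int_pow int_pow_mult_assoc int_pow_mult_gen_assoc gen_mult_int_pow_assoc int_pow_mult_inv_assoc inv_mult_int_pow_assoc
  int_pow_mult_int_pow int_pow_mult_gen gen_mult_int_pow int_pow_mult_inv inv_mult_int_pow inv_mult_group

text \<open>\<open>int_pow_normalize\<close> merges adjacent powers of one element; what remains after simplifying with it
  are equations whose two sides differ only in integer exponents, closed by the
  following congruences and \<open>arith\<close>.\<close>

lemma int_pow_exponent_cong: "i = j \<Longrightarrow> b [^] (i::int) = b [^] j" by simp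

lemma mult_cong: "x = x' \<Longrightarrow> y = y' \<Longrightarrow> x \<otimes> y = x' \<otimes> y'" by simp

lemma conj_nat_pow:
  assumes c: "d \<in> carrier G" "x \<in> carrier G" "y \<in> carrier G" and e: "d \<otimes> x = y \<otimes> d"
  shows "d \<otimes> x [^] (k::nat) = y [^] k \<otimes> d"
proof (induction k)
  case (Suc k)
  have "d \<otimes> x [^] Suc k = (d \<otimes> x [^] k) \<otimes> x" using c by (simp add: m_assoc)
  also have "\<dots> = y [^] k \<otimes> (d \<otimes> x)" using Suc c by (simp add: m_assoc)
  also have "\<dots> = y [^] Suc k \<otimes> d" using e c by (simp add: m_assoc)
  finally show ?case .
qed (use c in simp)

lemma conj_int_pow:
  assumes c: "d \<in> carrier G" "x \<in> carrier G" "y \<in> carrier G" and e: "d \<otimes> x = y \<otimes> d"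
  shows "d \<otimes> x [^] (i::int) = y [^] i \<otimes> d"
proof (cases "i \<ge> 0")
  case True
  then obtain k where "i = int k" by (metis nonneg_eq_int)
  then show ?thesis using conj_nat_pow[OF c e, of k] by (simp add: int_pow_int)
next
  case False
  then obtain k where k: "i = - int k" by (metis neg_0_le_iff_le nonneg_eq_int le_cases minus_minus)
  have h: "d \<otimes> x [^] k = y [^] k \<otimes> d" by (rule conj_nat_pow[OF c e])
  have "inv (y [^] k) \<otimes> (d \<otimes> x [^] k) \<otimes> inv (x [^] k) = inv (y [^] k) \<otimes> (y [^] k \<otimes> d) \<otimes> inv (x [^] k)"
    by (simp add: h)
  then have "d \<otimes> inv (x [^] k) = inv (y [^] k) \<otimes> d"
    using c by (simp add: m_assoc inv_mult_cancel_left mult_inv_cancel_left)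
  then show ?thesis using c k by (simp add: int_pow_neg int_pow_int)
qed

lemma braid_of_braid_relator:
  assumes ab: "a \<in> carrier G" "b \<in> carrier G" and R: "braid_relator G a b = \<one>"
    and that: "z \<in> carrier G"
  shows "a \<otimes> (b \<otimes> (a \<otimes> z)) = b \<otimes> (a \<otimes> (b \<otimes> z))"
proof -
  have "(a \<otimes> b \<otimes> a) \<otimes> (inv b \<otimes> inv a \<otimes> inv b) = \<one>"
    using R ab by (simp add: braid_relator_def m_assoc)
  then have "inv (inv b \<otimes> inv a \<otimes> inv b) = a \<otimes> b \<otimes> a"
    by (rule inv_equality) (use ab in auto)
  moreover have "inv (inv b \<otimes> inv a \<otimes> inv b) = b \<otimes> a \<otimes> b"
    using ab by (simp add: inv_mult_group m_assoc)
  ultimately have "a \<otimes> b \<otimes> a = b \<otimes> a \<otimes> b" by simp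
  then show ?thesis using that ab by (metis m_assoc m_closed)
qed

lemma braid_power:
  assumes ab: "a \<in> carrier G" "b \<in> carrier G"
    and br: "\<And>z. z \<in> carrier G \<Longrightarrow> a \<otimes> (b \<otimes> (a \<otimes> z)) = b \<otimes> (a \<otimes> (b \<otimes> z))"
  shows "z \<in> carrier G \<Longrightarrow> b [^] (k::nat) \<otimes> (a \<otimes> (b \<otimes> z)) = a \<otimes> (b \<otimes> (a [^] k \<otimes> z))"
proof (induction k arbitrary: z)
  case 0 then show ?case using ab by simp
next
  case (Suc k)
  have "b [^] Suc k \<otimes> (a \<otimes> (b \<otimes> z)) = b \<otimes> (b [^] k \<otimes> (a \<otimes> (b \<otimes> z)))"
    using ab Suc.prems by (subst nat_pow_Suc2) (simp_all add: m_assoc)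
  also have "\<dots> = b \<otimes> (a \<otimes> (b \<otimes> (a [^] k \<otimes> z)))" using Suc by simp
  also have "\<dots> = a \<otimes> (b \<otimes> (a \<otimes> (a [^] k \<otimes> z)))" using br[of "a [^] k \<otimes> z"] ab Suc.prems by simp
  also have "\<dots> = a \<otimes> (b \<otimes> (a [^] Suc k \<otimes> z))" using ab Suc.prems by (subst nat_pow_Suc2) (simp_all add: m_assoc)
  finally show ?case .
qed

lemma relator_S_conjugate:
  assumes ab: "a \<in> carrier G" "b \<in> carrier G" and R: "braid_relator G a b = \<one>"
  shows "relator_S G n a b = inv (b [^] (int n + 1)) \<otimes> power_relator G n a b \<otimes> b [^] (int n + 1)"
proof -
  have br: "\<And>z. z \<in> carrier G \<Longrightarrow> a \<otimes> (b \<otimes> (a \<otimes> z)) = b \<otimes> (a \<otimes> (b \<otimes> z))"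
    using braid_of_braid_relator[OF ab R] .
  have "relator_S G n a b = b [^] (- int n - 2) \<otimes> (inv a \<otimes> (b [^] (int n - 1) \<otimes> (a \<otimes> (b \<otimes> a))))"
    using ab by (simp add: relator_S_def m_assoc)
  also have "\<dots> = b [^] (- int n - 2) \<otimes> (inv a \<otimes> (b [^] (int n - 1) \<otimes> (b \<otimes> (a \<otimes> b))))"
    using br[of "\<one>"] ab by simp
  also have "\<dots> = b [^] (- int n - 2) \<otimes> (inv a \<otimes> (b [^] (int n) \<otimes> (a \<otimes> b)))"
    using ab by (simp add: int_pow_normalize)
  also have "b [^] (int n) \<otimes> (a \<otimes> b) = a \<otimes> (b \<otimes> a [^] (int n))"
    using braid_power[OF ab br, of "\<one>" n] ab by (simp add: int_pow_int)
  also have "b [^] (- int n - 2) \<otimes> (inv a \<otimes> (a \<otimes> (b \<otimes> a [^] (int n)))) = b [^] (- int n - 1) \<otimes> a [^] (int n)"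
    using ab by (simp add: int_pow_normalize, (intro refl mult_cong int_pow_exponent_cong; arith)?)
  also have "\<dots> = inv (b [^] (int n + 1)) \<otimes> power_relator G n a b \<otimes> b [^] (int n + 1)"
    using ab by (simp add: int_pow_normalize power_relator_def, (intro refl mult_cong int_pow_exponent_cong; arith)?)
  finally show ?thesis .
qed

lemma relator_T_conjugate:
  assumes ab: "a \<in> carrier G" "b \<in> carrier G" and S: "relator_S G n a b = \<one>"
  shows "relator_T G n a b = inv (a \<otimes> b \<otimes> a \<otimes> inv b) \<otimes> inv (braid_relator G a b) \<otimes> (a \<otimes> b \<otimes> a \<otimes> inv b)"
proof -
  define P0 where "P0 = inv a \<otimes> (b [^] (int n - 1) \<otimes> a)"
  have P0c: "P0 \<in> carrier G" using ab by (simp add: P0_def)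
  have "b [^] (- int n - 2) \<otimes> (P0 \<otimes> (b \<otimes> a)) = \<one>"
    using S ab by (simp add: relator_S_def m_assoc P0_def)
  then have P: "P0 = inv (b [^] (- int n - 2)) \<otimes> inv (b \<otimes> a)"
    using middle_eq_of_mult_eq_one[of "b [^] (- int n - 2)" P0 "b \<otimes> a"] ab P0c by simp
  have e: "inv a \<otimes> (b [^] (int n) \<otimes> a) = P0 \<otimes> (inv a \<otimes> (b \<otimes> a))"
    using ab by (simp add: P0_def int_pow_normalize)
  have "relator_T G n a b = b [^] (- int n - 1) \<otimes> (inv a \<otimes> (b [^] (int n) \<otimes> a))"
    using ab by (simp add: relator_T_def m_assoc)
  also have "\<dots> = b [^] (- int n - 1) \<otimes> (P0 \<otimes> (inv a \<otimes> (b \<otimes> a)))"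
    by (simp add: e)
  also have "\<dots> = b \<otimes> (inv a \<otimes> (inv b \<otimes> (inv a \<otimes> (b \<otimes> a))))"
    unfolding P using ab by (simp add: int_pow_normalize, (intro refl mult_cong int_pow_exponent_cong; arith)?)
  also have "\<dots> = inv (a \<otimes> b \<otimes> a \<otimes> inv b) \<otimes> inv (braid_relator G a b) \<otimes> (a \<otimes> b \<otimes> a \<otimes> inv b)"
    using ab by (simp add: int_pow_normalize braid_relator_def)
  finally show ?thesis .
qed

lemma relator_U_conjugate:
  assumes ab: "a \<in> carrier G" "b \<in> carrier G" and T: "relator_T G n a b = \<one>"
  shows "relator_U G n a b = inv (b [^] (- int n - 1) \<otimes> inv a \<otimes> b [^] (int n - 1)) \<otimes> relator_S G n a b
           \<otimes> (b [^] (- int n - 1) \<otimes> inv a \<otimes> b [^] (int n - 1))"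
proof -
  have "b [^] (- int n - 1) \<otimes> (inv a \<otimes> (b [^] (int n) \<otimes> a)) = \<one>"
    using T ab by (simp add: relator_T_def m_assoc)
  then have t1: "inv a \<otimes> (b [^] (int n) \<otimes> a) = b [^] (int n + 1)"
    using eq_inv_of_mult_eq_one[of "b [^] (- int n - 1)" "inv a \<otimes> (b [^] (int n) \<otimes> a)"] ab
    by (simp add: int_pow_normalize, (intro refl mult_cong int_pow_exponent_cong; arith)?)
  have l: "a \<otimes> (inv a \<otimes> (b [^] (int n) \<otimes> a)) \<otimes> inv a = b [^] (int n)"
    using ab by (simp add: m_assoc inv_mult_cancel_left mult_inv_cancel_left)
  have "b [^] (int n) = a \<otimes> b [^] (int n + 1) \<otimes> inv a"
    using l[unfolded t1] by simp
  then have "inv (b [^] (int n)) = inv (a \<otimes> b [^] (int n + 1) \<otimes> inv a)" by simp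
  then have t2: "b [^] (- int n) = a \<otimes> (b [^] (- int n - 1) \<otimes> inv a)"
    using ab by (simp add: int_pow_normalize, (intro refl mult_cong int_pow_exponent_cong; arith)?)
  have t2': "a \<otimes> (b [^] (- int n - 1) \<otimes> (inv a \<otimes> z)) = b [^] (- int n) \<otimes> z" if "z \<in> carrier G" for z
    using that ab by (simp add: t2 m_assoc[symmetric])
  have "inv (b [^] (- int n - 1) \<otimes> inv a \<otimes> b [^] (int n - 1)) \<otimes> relator_S G n a b
           \<otimes> (b [^] (- int n - 1) \<otimes> inv a \<otimes> b [^] (int n - 1))
        = b [^] (1 - int n) \<otimes> (a \<otimes> (inv b \<otimes> (inv a \<otimes> (b [^] (int n - 1) \<otimes> (a \<otimes> (b \<otimes> 
           (a \<otimes> (b [^] (- int n - 1) \<otimes> (inv a \<otimes> b [^] (int n - 1))))))))))"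
    using ab by (simp add: int_pow_normalize relator_S_def, (intro refl mult_cong int_pow_exponent_cong; arith)?)
  also have "\<dots> = b [^] (1 - int n) \<otimes> (a \<otimes> (inv b \<otimes> (inv a \<otimes> (b [^] (int n - 1) \<otimes> (a \<otimes> (b \<otimes> 
           (b [^] (- int n) \<otimes> b [^] (int n - 1))))))))"
    using ab by (simp add: t2')
  also have "\<dots> = relator_U G n a b"
    using ab by (simp add: int_pow_normalize relator_U_def, (intro refl mult_cong int_pow_exponent_cong; arith)?)
  finally show ?thesis by simp
qed

lemma braid_relator_transvection_conjugate:
  assumes ab: "a \<in> carrier G" "b \<in> carrier G" and U: "relator_U G n a b = \<one>"
  shows "braid_relator G (a \<otimes> b) b = inv (inv a \<otimes> b [^] (- int n)) \<otimes> inv (relator_T G n a b) \<otimes> (inv a \<otimes> b [^] (- int n))"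
proof -
  have "b [^] (1 - int n) \<otimes> ((a \<otimes> (inv b \<otimes> inv a)) \<otimes> (b [^] (int n - 1) \<otimes> a)) = \<one>"
    using U ab by (simp add: relator_U_def m_assoc)
  then have u1: "a \<otimes> (inv b \<otimes> inv a) = inv (b [^] (1 - int n)) \<otimes> inv (b [^] (int n - 1) \<otimes> a)"
    using middle_eq_of_mult_eq_one[of "b [^] (1 - int n)" "a \<otimes> (inv b \<otimes> inv a)" "b [^] (int n - 1) \<otimes> a"] ab by simp
  have u2: "a \<otimes> (inv b \<otimes> (inv a \<otimes> z)) = b [^] (int n - 1) \<otimes> (inv a \<otimes> (b [^] (1 - int n) \<otimes> z))"
    if "z \<in> carrier G" for z
  proof -
    have "a \<otimes> (inv b \<otimes> (inv a \<otimes> z)) = (a \<otimes> (inv b \<otimes> inv a)) \<otimes> z" using ab that by (simp add: m_assoc)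
    also have "\<dots> = b [^] (int n - 1) \<otimes> (inv a \<otimes> (b [^] (1 - int n) \<otimes> z))"
      unfolding u1 using ab that by (simp add: int_pow_normalize, (intro refl mult_cong int_pow_exponent_cong; arith)?)
    finally show ?thesis .
  qed
  have "braid_relator G (a \<otimes> b) b = a \<otimes> (b \<otimes> (b \<otimes> (a \<otimes> (inv b \<otimes> (inv a \<otimes> inv b)))))"
    using ab by (simp add: braid_relator_def int_pow_normalize)
  also have "\<dots> = a \<otimes> (b \<otimes> (b \<otimes> (b [^] (int n - 1) \<otimes> (inv a \<otimes> (b [^] (1 - int n) \<otimes> inv b)))))"
    using ab by (simp add: u2)
  also have "\<dots> = inv (inv a \<otimes> b [^] (- int n)) \<otimes> inv (relator_T G n a b) \<otimes> (inv a \<otimes> b [^] (- int n))"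
    using ab by (simp add: int_pow_normalize relator_T_def, (intro refl mult_cong int_pow_exponent_cong; arith)?)
  finally show ?thesis .
qed

lemma power_relator_transvection_conjugate:
  assumes ab: "a \<in> carrier G" "b \<in> carrier G" and Q: "braid_relator G (a \<otimes> b) b = \<one>" and n: "n \<ge> 1"
  shows "power_relator G n (a \<otimes> b) b = inv (b [^] (1 - int n)) \<otimes> relator_U G n a b \<otimes> b [^] (1 - int n)"
proof -
  define A where "A = a \<otimes> b"
  have Ac: "A \<in> carrier G" using ab by (simp add: A_def)
  have br: "\<And>z. z \<in> carrier G \<Longrightarrow> A \<otimes> (b \<otimes> (A \<otimes> z)) = b \<otimes> (A \<otimes> (b \<otimes> z))"
    using braid_of_braid_relator[OF Ac ab(2)] Q by (simp add: A_def)
  have bp: "b [^] (n - 1) \<otimes> (A \<otimes> (b \<otimes> z)) = A \<otimes> (b \<otimes> (A [^] (n - 1) \<otimes> z))" if "z \<in> carrier G" for z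
    using braid_power[OF Ac ab(2) br that] .
  have i1: "int (n - 1) = int n - 1" using n by simp
  have bp': "b [^] (int n - 1) \<otimes> (a \<otimes> (b \<otimes> (b \<otimes> z))) = a \<otimes> (b \<otimes> (b \<otimes> (A [^] (int n - 1) \<otimes> z)))"
    if "z \<in> carrier G" for z
    using bp[OF that] ab that Ac unfolding int_pow_int[symmetric] i1 by (simp add: A_def m_assoc)
  have "inv (b [^] (1 - int n)) \<otimes> relator_U G n a b \<otimes> b [^] (1 - int n)
       = a \<otimes> (inv b \<otimes> (inv a \<otimes> (b [^] (int n - 1) \<otimes> (a \<otimes> (b \<otimes> (b \<otimes> b [^] (- int n - 1)))))))"
    using ab by (simp add: int_pow_normalize relator_U_def, (intro refl mult_cong int_pow_exponent_cong; arith)?)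
  also have "\<dots> = a \<otimes> (b \<otimes> (A [^] (int n - 1) \<otimes> b [^] (- int n - 1)))"
    using ab Ac by (simp add: bp' inv_mult_cancel_left mult_inv_cancel_left)
  also have "\<dots> = power_relator G n (a \<otimes> b) b"
  proof -
    have "A [^] int n = A \<otimes> A [^] (int n - 1)" using gen_mult_int_pow[OF Ac, of "int n - 1"] by simp
    then show ?thesis using ab Ac by (simp add: power_relator_def A_def[symmetric] m_assoc) (simp add: A_def m_assoc)
  qed
  finally show ?thesis by simp
qed

lemma power_relator_swap_conjugate:
  assumes ab: "a \<in> carrier G" "b \<in> carrier G" and R: "braid_relator G a b = \<one>"
  shows "power_relator G n b a = inv (inv (a \<otimes> b \<otimes> a)) \<otimes> power_relator G n a b \<otimes> inv (a \<otimes> b \<otimes> a)"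
proof -
  define D where "D = a \<otimes> b \<otimes> a"
  have Dc: "D \<in> carrier G" using ab by (simp add: D_def)
  have br: "\<And>z. z \<in> carrier G \<Longrightarrow> a \<otimes> (b \<otimes> (a \<otimes> z)) = b \<otimes> (a \<otimes> (b \<otimes> z))"
    using braid_of_braid_relator[OF ab R] .
  have e1: "D \<otimes> a = b \<otimes> D" using br[of a] ab by (simp add: D_def m_assoc)
  have e2: "D \<otimes> b = a \<otimes> D" using br[of "\<one>", symmetric] ab by (simp add: D_def m_assoc)
  have "inv (inv D) \<otimes> power_relator G n a b \<otimes> inv D = D \<otimes> a [^] int n \<otimes> b [^] (- int n - 1) \<otimes> inv D"
    using ab Dc by (simp add: power_relator_def m_assoc)
  also have "\<dots> = b [^] int n \<otimes> (D \<otimes> b [^] (- int n - 1)) \<otimes> inv D"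
    using conj_int_pow[OF Dc ab(1,2) e1, of "int n"] ab Dc by (simp add: m_assoc)
  also have "\<dots> = b [^] int n \<otimes> a [^] (- int n - 1)"
    using conj_int_pow[OF Dc ab(2,1) e2, of "- int n - 1"] ab Dc by (simp add: m_assoc inv_mult_cancel_left mult_inv_cancel_left)
  finally show ?thesis by (simp add: power_relator_def D_def)
qed

end

lemma reduced_pow[simp]: "reduced x \<Longrightarrow> reduced (x [^]\<^bsub>free_group\<^esub> (i::int))"
  using F.int_pow_closed[of x i] by simp

context
  fixes G' :: "('c, 'd) monoid_scheme" and h
  assumes grp: "group G'" and hh: "h \<in> hom free_group G'"
begin

interpretation gh: group_hom free_group G' h
  using grp hh by (simp add: group_hom_def group_hom_axioms_def F.is_group)

lemma hom_fmult: "reduced x \<Longrightarrow> reduced y \<Longrightarrow> h (fmult x y) = h x \<otimes>\<^bsub>G'\<^esub> h y"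
  using gh.hom_mult by simp

lemma hom_finv: "reduced x \<Longrightarrow> h (finv x) = inv\<^bsub>G'\<^esub> (h x)"
  using gh.hom_inv by simp

lemma hom_int_pow: "reduced x \<Longrightarrow> h (x [^]\<^bsub>free_group\<^esub> (i::int)) = h x [^]\<^bsub>G'\<^esub> i"
  using gh.hom_int_pow by simp

lemma hom_closed_free: "reduced x \<Longrightarrow> h x \<in> carrier G'"
  using gh.hom_closed by simp

lemma hom_conjugate:
  "reduced g \<Longrightarrow> reduced w \<Longrightarrow>
    h (conjugate g w) = inv\<^bsub>G'\<^esub> (h g) \<otimes>\<^bsub>G'\<^esub> h w \<otimes>\<^bsub>G'\<^esub> h g"
  by (simp add: conjugate_def hom_fmult hom_finv gh.H.m_assoc hom_closed_free)

lemmas hom_simps = hom_fmult hom_finv hom_int_pow hom_closed_free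

lemma hom_braid_relator: "reduced a \<Longrightarrow> reduced b \<Longrightarrow> h (braid_relator free_group a b) = braid_relator G' (h a) (h b)"
  by (simp add: braid_relator_def hom_simps)

lemma hom_power_relator: "reduced a \<Longrightarrow> reduced b \<Longrightarrow> h (power_relator free_group n a b) = power_relator G' n (h a) (h b)"
  by (simp add: power_relator_def hom_simps)

lemma hom_relator_S: "reduced a \<Longrightarrow> reduced b \<Longrightarrow> h (relator_S free_group n a b) = relator_S G' n (h a) (h b)"
  by (simp add: relator_S_def hom_simps)

lemma hom_relator_T: "reduced a \<Longrightarrow> reduced b \<Longrightarrow> h (relator_T free_group n a b) = relator_T G' n (h a) (h b)"
  by (simp add: relator_T_def hom_simps)

lemma hom_relator_U: "reduced a \<Longrightarrow> reduced b \<Longrightarrow> h (relator_U free_group n a b) = relator_U G' n (h a) (h b)"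
  by (simp add: relator_U_def hom_simps)

lemmas hom_relators = hom_simps hom_conjugate hom_braid_relator hom_power_relator
  hom_relator_S hom_relator_T hom_relator_U

end

lemma reduced_relators[simp]:
  "reduced (braid_relator free_group a b)" "reduced (power_relator free_group n a b)" "reduced (relator_S free_group n a b)"
  "reduced (relator_T free_group n a b)" "reduced (relator_U free_group n a b)"
  by (simp_all add: braid_relator_def power_relator_def relator_S_def relator_T_def relator_U_def)

section \<open>AC-chains between Akbulut--Kurby pairs\<close>

definition AK_pair :: "nat \<Rightarrow> letter list \<Rightarrow> letter list \<Rightarrow> letter list \<times> letter list" where
  "AK_pair n a b = (braid_relator free_group a b, power_relator free_group n a b)"

lemma AK_relators: "AK n = AK_pair n wX wY"
proof -
  have braid: "braid_relator free_group wX wY = [gx, gy, gx, inv_letter gy, inv_letter gx, inv_letter gy]"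
    by (simp add: braid_relator_def fmult_def finv_def gx_def gy_def inv_letter_def)
  have "wY [^]\<^bsub>free_group\<^esub> (- int n - 1) = wY [^]\<^bsub>free_group\<^esub> (- int (Suc n))"
    by (rule arg_cong[where f = "\<lambda>i. wY [^]\<^bsub>free_group\<^esub> i"]) simp
  also have "\<dots> = inv\<^bsub>free_group\<^esub> (wY [^]\<^bsub>free_group\<^esub> (Suc n))"
    by (rule F.int_pow_neg_int) simp
  also have "\<dots> = finv (replicate (Suc n) gy)"
    by (simp only: pow_replicate) (rule inv_F, rule reduced_replicate)
  finally have y_pow: "wY [^]\<^bsub>free_group\<^esub> (- int n - 1) = replicate (Suc n) (inv_letter gy)"
    by (simp add: finv_def replicate_append_same del: replicate_Suc)
  have r: "reduced (replicate n gx @ replicate (Suc n) (inv_letter gy))"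
    by (auto simp: reduced_append gx_def gy_def inv_letter_def last_replicate hd_replicate simp del: replicate_Suc)
  have power: "power_relator free_group n wX wY = replicate n gx @ replicate (n + 1) (inv_letter gy)"
    unfolding power_relator_def using r
    by (simp add: int_pow_int pow_replicate y_pow fmult_append del: replicate_Suc)
  show ?thesis using braid power by (simp add: AK_def AK_pair_def)
qed

lemma endo_AK:
  assumes "reduced u" "reduced v"
  shows "(endo u v (fst (AK n)), endo u v (snd (AK n))) = AK_pair n u v"
  using assms by (simp add: AK_relators AK_pair_def hom_relators[OF F.is_group endo_hom[OF assms]])

context
  fixes a b :: "letter list"
  assumes a: "reduced a" and b: "reduced b"
begin

lemma AC_power_relator_to_S:
  "AC_equiv (braid_relator free_group a b, power_relator free_group n a b)
            (braid_relator free_group a b, relator_S free_group n a b)"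
proof (rule AC_second_mod_first[where g = "b [^]\<^bsub>free_group\<^esub> (int n + 1)", OF _ _ _ _ disjI1[OF refl]])
  fix G :: "letter list set monoid" and h
  assume G: "group G" and h: "h \<in> hom free_group G" and "h (braid_relator free_group a b) = \<one>\<^bsub>G\<^esub>"
  then show "h (relator_S free_group n a b)
      = h (conjugate (b [^]\<^bsub>free_group\<^esub> (int n + 1)) (power_relator free_group n a b))"
    using group.relator_S_conjugate[OF G hom_closed_free[OF G h a] hom_closed_free[OF G h b]] a b
    by (simp add: hom_relators[OF G h])
qed (simp_all add: a b)

lemma AC_braid_relator_to_T:
  "AC_equiv (braid_relator free_group a b, relator_S free_group n a b)
            (relator_T free_group n a b, relator_S free_group n a b)"
proof (rule AC_first_mod_second[where g = "fmult (fmult (fmult a b) a) (finv b)", OF _ _ _ _ disjI2[OF refl]])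
  fix G :: "letter list set monoid" and h
  assume G: "group G" and h: "h \<in> hom free_group G" and "h (relator_S free_group n a b) = \<one>\<^bsub>G\<^esub>"
  then show "h (relator_T free_group n a b)
      = h (conjugate (fmult (fmult (fmult a b) a) (finv b)) (finv (braid_relator free_group a b)))"
    using group.relator_T_conjugate[OF G hom_closed_free[OF G h a] hom_closed_free[OF G h b]] a b
    by (simp add: hom_relators[OF G h])
qed (simp_all add: a b)

lemma AC_relator_S_to_U:
  "AC_equiv (relator_T free_group n a b, relator_S free_group n a b)
            (relator_T free_group n a b, relator_U free_group n a b)"
proof (rule AC_second_mod_first[where g = "fmult (fmult (b [^]\<^bsub>free_group\<^esub> (- int n - 1)) (finv a))
      (b [^]\<^bsub>free_group\<^esub> (int n - 1))", OF _ _ _ _ disjI1[OF refl]])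
  fix G :: "letter list set monoid" and h
  assume G: "group G" and h: "h \<in> hom free_group G" and "h (relator_T free_group n a b) = \<one>\<^bsub>G\<^esub>"
  then show "h (relator_U free_group n a b)
      = h (conjugate (fmult (fmult (b [^]\<^bsub>free_group\<^esub> (- int n - 1)) (finv a))
          (b [^]\<^bsub>free_group\<^esub> (int n - 1))) (relator_S free_group n a b))"
    using group.relator_U_conjugate[OF G hom_closed_free[OF G h a] hom_closed_free[OF G h b]] a b
    by (simp add: hom_relators[OF G h])
qed (simp_all add: a b)

lemma AC_relator_T_to_braid_transvection:
  "AC_equiv (relator_T free_group n a b, relator_U free_group n a b)
            (braid_relator free_group (fmult a b) b, relator_U free_group n a b)"
proof (rule AC_first_mod_second[where g = "fmult (finv a) (b [^]\<^bsub>free_group\<^esub> (- int n))",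
      OF _ _ _ _ disjI2[OF refl]])
  fix G :: "letter list set monoid" and h
  assume G: "group G" and h: "h \<in> hom free_group G" and "h (relator_U free_group n a b) = \<one>\<^bsub>G\<^esub>"
  then show "h (braid_relator free_group (fmult a b) b)
      = h (conjugate (fmult (finv a) (b [^]\<^bsub>free_group\<^esub> (- int n))) (finv (relator_T free_group n a b)))"
    using group.braid_relator_transvection_conjugate[OF G hom_closed_free[OF G h a] hom_closed_free[OF G h b]] a b
    by (simp add: hom_relators[OF G h])
qed (simp_all add: a b)

lemma AC_relator_U_to_power_transvection:
  assumes n: "n \<ge> 1"
  shows "AC_equiv (braid_relator free_group (fmult a b) b, relator_U free_group n a b)
            (braid_relator free_group (fmult a b) b, power_relator free_group n (fmult a b) b)"
proof (rule AC_second_mod_first[where g = "b [^]\<^bsub>free_group\<^esub> (1 - int n)", OF _ _ _ _ disjI1[OF refl]])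
  fix G :: "letter list set monoid" and h
  assume G: "group G" and h: "h \<in> hom free_group G"
    and "h (braid_relator free_group (fmult a b) b) = \<one>\<^bsub>G\<^esub>"
  then show "h (power_relator free_group n (fmult a b) b)
      = h (conjugate (b [^]\<^bsub>free_group\<^esub> (1 - int n)) (relator_U free_group n a b))"
    using group.power_relator_transvection_conjugate[OF G hom_closed_free[OF G h a] hom_closed_free[OF G h b]] a b n
    by (simp add: hom_relators[OF G h])
qed (simp_all add: a b)

lemma AC_relators_transvection:
  assumes "n \<ge> 1"
  shows "AC_equiv (AK_pair n a b) (AK_pair n (fmult a b) b)"
  unfolding AK_pair_def
  using AC_power_relator_to_S AC_braid_relator_to_T AC_relator_S_to_U AC_relator_T_to_braid_transvection
    AC_relator_U_to_power_transvection[OF assms]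
  by (blast intro: AC_equiv_trans)

lemma AC_relators_swap: "AC_equiv (AK_pair n a b) (AK_pair n b a)"
proof -
  let ?g = "finv (fmult (fmult a b) a)"
  have "AC_equiv (AK_pair n a b) (braid_relator free_group a b, power_relator free_group n b a)"
    unfolding AK_pair_def
  proof (rule AC_second_mod_first[where g = ?g, OF _ _ _ _ disjI1[OF refl]])
    fix G :: "letter list set monoid" and h
    assume G: "group G" and h: "h \<in> hom free_group G" and "h (braid_relator free_group a b) = \<one>\<^bsub>G\<^esub>"
    then show "h (power_relator free_group n b a) = h (conjugate ?g (power_relator free_group n a b))"
      using group.power_relator_swap_conjugate[OF G hom_closed_free[OF G h a] hom_closed_free[OF G h b]] a b
      by (simp add: hom_relators[OF G h])
  qed (simp_all add: a b)
  also have "AC_equiv \<dots> (AK_pair n b a)"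
  proof -
    have "finv (braid_relator free_group a b) = braid_relator free_group b a"
      using a b by (simp add: braid_relator_def F.inv_mult_group[symmetric, simplified] finv_fmult fmult_assoc)
    then show ?thesis unfolding AK_pair_def by (intro AC_equiv_move AC_inv1) simp
  qed
  finally show ?thesis .
qed

lemma AC_relators_conjugate:
  assumes g: "reduced g"
  shows "AC_equiv (AK_pair n a b) (AK_pair n (conjugate g a) (conjugate g b))"
proof -
  have h: "conjugate g \<in> hom free_group free_group"
    using g by (intro homI) (auto simp: conjugate_fmult)
  have "AC_equiv (AK_pair n a b)
      (conjugate g (braid_relator free_group a b), conjugate g (power_relator free_group n a b))"
    unfolding AK_pair_def
    by (rule AC_equiv_step[OF AC_conj1[OF g refl]], rule AC_equiv_move[OF AC_conj2[OF g refl]])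
  also have "(conjugate g (braid_relator free_group a b), conjugate g (power_relator free_group n a b))
      = AK_pair n (conjugate g a) (conjugate g b)"
    using a b by (simp add: AK_pair_def hom_relators[OF F.is_group h])
  finally show ?thesis .
qed

end

definition AK_invariant :: "nat \<Rightarrow> letter list \<Rightarrow> letter list \<Rightarrow> bool" where
  "AK_invariant n u v \<longleftrightarrow> AC_equiv (AK_pair n u v) (AK n)"

lemma AK_invariant_AC_equiv:
  assumes "AC_equiv (AK_pair n a b) (AK_pair n c d)" "reduced a" "reduced b"
  shows "AK_invariant n c d \<longleftrightarrow> AK_invariant n a b"
  using assms AC_equiv_sym[OF assms(1)] unfolding AK_invariant_def
  by (auto simp: AK_pair_def intro: AC_equiv_trans)

lemma AK_invariant_gens: "AK_invariant n wX wY"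
  by (simp add: AK_invariant_def AK_relators)

lemma AK_invariant_swap: "reduced u \<Longrightarrow> reduced v \<Longrightarrow> AK_invariant n v u \<longleftrightarrow> AK_invariant n u v"
  by (rule AK_invariant_AC_equiv[OF AC_relators_swap])

lemma AK_invariant_transvection:
  "n \<ge> 1 \<Longrightarrow> reduced u \<Longrightarrow> reduced v \<Longrightarrow> AK_invariant n (fmult u v) v \<longleftrightarrow> AK_invariant n u v"
  by (rule AK_invariant_AC_equiv[OF AC_relators_transvection])

lemma AK_invariant_conjugate:
  "reduced g \<Longrightarrow> reduced u \<Longrightarrow> reduced v \<Longrightarrow>
    AK_invariant n (conjugate g u) (conjugate g v) \<longleftrightarrow> AK_invariant n u v"
  by (rule AK_invariant_AC_equiv[OF AC_relators_conjugate])

lemma AK_invariant_transvection_finv: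
  "n \<ge> 1 \<Longrightarrow> reduced u \<Longrightarrow> reduced v \<Longrightarrow>
    AK_invariant n (fmult u (finv v)) v \<longleftrightarrow> AK_invariant n u v"
  using AK_invariant_transvection[of n "fmult u (finv v)" v] by (simp add: fmult_assoc fmult_finv_left)

lemma AK_invariant_finv_left:
  assumes n: "n \<ge> 1" and r: "reduced u" "reduced v"
  shows "AK_invariant n (finv u) v \<longleftrightarrow> AK_invariant n u v"
proof -
  let ?w = "fmult u v"
  have "AK_invariant n u v \<longleftrightarrow> AK_invariant n ?w v" using AK_invariant_transvection[OF n r] by simp
  also have "\<dots> \<longleftrightarrow> AK_invariant n v ?w" using AK_invariant_swap r by simp
  also have "\<dots> \<longleftrightarrow> AK_invariant n (fmult v (finv ?w)) ?w" using AK_invariant_transvection_finv[OF n, of v ?w] r by simp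
  also have "fmult v (finv ?w) = finv u" using r
    by (simp add: finv_fmult fmult_assoc[symmetric] fmult_finv_right)
  also have "AK_invariant n (finv u) ?w \<longleftrightarrow> AK_invariant n ?w (finv u)" using AK_invariant_swap r by simp
  also have "\<dots> \<longleftrightarrow> AK_invariant n (fmult ?w (finv u)) (finv u)" using AK_invariant_transvection[OF n, of ?w "finv u"] r by simp
  also have "\<dots> \<longleftrightarrow> AK_invariant n (conjugate u (fmult ?w (finv u))) (conjugate u (finv u))" using AK_invariant_conjugate[of u] r by simp
  also have "conjugate u (fmult ?w (finv u)) = v" using r
    by (simp add: conjugate_def fmult_assoc fmult_finv_right fmult_finv_left fmult_finv_cancel)
  also have "conjugate u (finv u) = finv u" using r
    by (simp add: conjugate_def fmult_assoc fmult_finv_right fmult_finv_left fmult_finv_cancel)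
  also have "AK_invariant n v (finv u) \<longleftrightarrow> AK_invariant n (finv u) v" using AK_invariant_swap r by simp
  finally show ?thesis by simp
qed

lemma AK_invariant_finv_right:
  "n \<ge> 1 \<Longrightarrow> reduced u \<Longrightarrow> reduced v \<Longrightarrow>
    AK_invariant n u (finv v) \<longleftrightarrow> AK_invariant n u v"
  by (metis AK_invariant_finv_left AK_invariant_swap reduced_finv)

section \<open>Nielsen moves and free bases\<close>

inductive nielsen_move :: "letter list \<times> letter list \<Rightarrow> letter list \<times> letter list \<Rightarrow> bool" where
  swap: "nielsen_move (u, v) (v, u)"
| transvection: "nielsen_move (u, v) (fmult u v, v)"
| inverse: "nielsen_move (u, v) (finv u, v)"
| conjugation: "reduced g \<Longrightarrow> nielsen_move (u, v) (conjugate g u, conjugate g v)"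

lemma nielsen_move_reduced_pair: "nielsen_move p q \<Longrightarrow> reduced_pair p \<Longrightarrow> reduced_pair q"
  by (induction rule: nielsen_move.induct) auto

lemma nielsen_move_AK_invariant:
  "nielsen_move p q \<Longrightarrow> n \<ge> 1 \<Longrightarrow> reduced_pair p \<Longrightarrow> AK_invariant n (fst q) (snd q) \<Longrightarrow>
    AK_invariant n (fst p) (snd p)"
proof (induction rule: nielsen_move.induct)
  case (swap u v) then show ?case using AK_invariant_swap[of u v n] by simp
next
  case (transvection u v) then show ?case using AK_invariant_transvection[of n u v] by simp
next
  case (inverse u v) then show ?case using AK_invariant_finv_left[of n u v] by simp
next
  case (conjugation g u v) then show ?case using AK_invariant_conjugate[of g u v n] by simp
qed

lemma nielsen_moves_AK_invariant:
  "nielsen_move\<^sup>*\<^sup>* p q \<Longrightarrow> n \<ge> 1 \<Longrightarrow> reduced_pair p \<Longrightarrow> AK_invariant n (fst q) (snd q) \<Longrightarrow>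
    AK_invariant n (fst p) (snd p)"
proof (induction rule: converse_rtranclp_induct)
  case (step y z)
  have "reduced_pair z" using nielsen_move_reduced_pair[OF step.hyps(1) step.prems(2)] .
  then have "AK_invariant n (fst z) (snd z)" using step.IH step.prems by simp
  then show ?case using nielsen_move_AK_invariant[OF step.hyps(1) step.prems(1,2)] by simp
qed simp

lemma nielsen_inv1: "nielsen_move\<^sup>*\<^sup>* (u, v) (finv u, v)"
  by (simp add: nielsen_move.inverse r_into_rtranclp)

lemma nielsen_inv2: "nielsen_move\<^sup>*\<^sup>* (u, v) (u, finv v)"
proof -
  have "nielsen_move\<^sup>*\<^sup>* (u, v) (v, u)" by (rule r_into_rtranclp, rule nielsen_move.swap)
  also have "nielsen_move \<dots> (finv v, u)" by (rule nielsen_move.inverse)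
  also have "nielsen_move \<dots> (u, finv v)" by (rule nielsen_move.swap)
  finally show ?thesis .
qed

lemma nielsen_inv_both: "nielsen_move\<^sup>*\<^sup>* (p, q) (if e1 then finv p else p, if e2 then finv q else q)"
proof -
  have X: "nielsen_move\<^sup>*\<^sup>* (p, q) (if e1 then finv p else p, q)"
    by (cases e1) (auto simp: nielsen_inv1)
  have Y: "nielsen_move\<^sup>*\<^sup>* (if e1 then finv p else p, q) (if e1 then finv p else p, if e2 then finv q else q)"
    by (cases e2) (auto simp: nielsen_inv2)
  show ?thesis using X Y by (rule rtranclp_trans)
qed

lemma nielsen_mult_left:
  assumes r: "reduced a" "reduced b"
  shows "nielsen_move\<^sup>*\<^sup>* (a, b) (a, fmult a b)"
proof -
  have "nielsen_move\<^sup>*\<^sup>* (a, b) (finv a, finv b)"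
    using nielsen_inv1[of a b] nielsen_inv2[of "finv a" b] by simp
  also have "nielsen_move \<dots> (finv b, finv a)" by (rule nielsen_move.swap)
  also have "nielsen_move \<dots> (fmult (finv b) (finv a), finv a)" by (rule nielsen_move.transvection)
  also have "nielsen_move \<dots> (fmult a b, finv a)"
    using nielsen_move.inverse[of "fmult (finv b) (finv a)" "finv a"] r by (simp add: finv_fmult)
  also have "nielsen_move \<dots> (finv a, fmult a b)" by (rule nielsen_move.swap)
  also have "nielsen_move \<dots> (a, fmult a b)" using nielsen_move.inverse[of "finv a" "fmult a b"] by simp
  finally show ?thesis .
qed

lemma nielsen_conjugate_product:
  assumes "reduced a" "reduced b" "reduced g"
  shows "nielsen_move\<^sup>*\<^sup>* (b, a) (conjugate g b, conjugate g (fmult b a))"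
proof -
  have "nielsen_move\<^sup>*\<^sup>* (b, a) (b, fmult b a)" using assms by (intro nielsen_mult_left)
  also have "nielsen_move \<dots> (conjugate g b, conjugate g (fmult b a))"
    by (rule nielsen_move.conjugation[OF assms(3)])
  finally show ?thesis .
qed

lemma nielsen_letter_images:
  assumes s: "snd l \<noteq> snd l'"
  shows "nielsen_move\<^sup>*\<^sup>* (u, v) (endo_letter u v l, endo_letter u v l')"
proof (cases "snd l")
  case False
  have e: "endo_letter u v l = (if fst l then finv u else u)" "endo_letter u v l' = (if fst l' then finv v else v)"
    using False s by (auto simp: endo_letter_def)
  show ?thesis unfolding e by (rule nielsen_inv_both)
next
  case True
  have e: "endo_letter u v l = (if fst l then finv v else v)" "endo_letter u v l' = (if fst l' then finv u else u)"
    using True s by (auto simp: endo_letter_def)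
  have "nielsen_move (u, v) (v, u)" by (rule nielsen_move.swap)
  also have "nielsen_move\<^sup>*\<^sup>* \<dots> (endo_letter u v l, endo_letter u v l')"
    unfolding e by (rule nielsen_inv_both)
  finally show ?thesis .
qed

definition free_basis :: "letter list \<Rightarrow> letter list \<Rightarrow> bool" where
  "free_basis u v \<longleftrightarrow> reduced u \<and> reduced v \<and> bij_betw (endo u v) (carrier free_group) (carrier free_group)"

lemma free_basis_reduced: "free_basis u v \<Longrightarrow> reduced u \<and> reduced v"
  by (simp add: free_basis_def)

lemma free_basisI:
  assumes "reduced u" "reduced v" "bij_betw f (carrier free_group) (carrier free_group)"
    and "\<And>w. reduced w \<Longrightarrow> endo u v w = f w"
  shows "free_basis u v"
proof -
  have "bij_betw (endo u v) (carrier free_group) (carrier free_group)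
      \<longleftrightarrow> bij_betw f (carrier free_group) (carrier free_group)"
    by (rule bij_betw_cong) (simp add: assms(4))
  then show ?thesis using assms(1-3) by (simp add: free_basis_def)
qed

lemma free_basis_Aut:
  assumes "\<phi> \<in> Aut_F"
  shows "free_basis (\<phi> wX) (\<phi> wY)"
proof -
  have h: "\<phi> \<in> hom free_group free_group"
    and b: "bij_betw \<phi> (carrier free_group) (carrier free_group)"
    using assms by (auto simp: Aut_F_def iso_def)
  show ?thesis
  proof (rule free_basisI[OF _ _ b])
    show "endo (\<phi> wX) (\<phi> wY) w = \<phi> w" if "reduced w" for w
      using hom_eq_endo[OF h that] by simp
  qed (use hom_free_group(3)[OF h] in simp_all)
qed

lemma bij_betw_endo:
  assumes r: "reduced a" "reduced b" "reduced c" "reduced d"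
    and e: "endo c d a = wX" "endo c d b = wY" "endo a b c = wX" "endo a b d = wY"
  shows "bij_betw (endo a b) (carrier free_group) (carrier free_group)"
  by (rule bij_betw_byWitness[where f' = "endo c d"])
     (use r e in \<open>auto simp: endo_endo endo_gens\<close>)

lemma free_basis_endo:
  assumes B: "free_basis u v" and r: "reduced a" "reduced b" "reduced c" "reduced d"
    and e: "endo c d a = wX" "endo c d b = wY" "endo a b c = wX" "endo a b d = wY"
  shows "free_basis (endo u v a) (endo u v b)"
proof (rule free_basisI)
  show "bij_betw (endo u v \<circ> endo a b) (carrier free_group) (carrier free_group)"
    using bij_betw_endo[OF r e] B by (auto simp: free_basis_def intro: bij_betw_trans)
  show "endo (endo u v a) (endo u v b) w = (endo u v \<circ> endo a b) w" for w
    using B r by (simp add: free_basis_def endo_endo)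
qed simp_all

lemma free_basis_conjugate:
  assumes B: "free_basis u v" and g: "reduced g"
  shows "free_basis (conjugate g u) (conjugate g v)"
proof (rule free_basisI)
  have "bij_betw (conjugate g) (carrier free_group) (carrier free_group)"
    by (rule bij_betw_byWitness[where f' = "conjugate (finv g)"])
      (use g in \<open>auto simp: conjugate_conjugate_finv conjugate_finv_conjugate\<close>)
  then show "bij_betw (conjugate g \<circ> endo u v) (carrier free_group) (carrier free_group)"
    using B by (auto simp: free_basis_def intro: bij_betw_trans)
  show "endo (conjugate g u) (conjugate g v) w = (conjugate g \<circ> endo u v) w" for w
    using B g by (simp add: free_basis_def endo_conjugate)
qed simp_all

lemma nielsen_move_free_basis:
  "nielsen_move p q \<Longrightarrow> free_basis (fst p) (snd p) \<Longrightarrow> free_basis (fst q) (snd q)"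
proof (induction rule: nielsen_move.induct)
  case (swap u v)
  then show ?case using free_basis_endo[OF swap[simplified], of wY wX wY wX]
    by (simp add: free_basis_def endo_letter_def gx_def gy_def)
next
  case (transvection u v)
  have e: "endo (fmult wX (finv wY)) wY (fmult wX wY) = wX" "endo (fmult wX (finv wY)) wY wY = wY"
     "endo (fmult wX wY) wY (fmult wX (finv wY)) = wX" "endo (fmult wX wY) wY wY = wY"
    by (simp_all add: endo_letter_def gx_def gy_def fmult_def finv_def inv_letter_def)
  then have "free_basis (endo u v (fmult wX wY)) (endo u v wY)"
    using free_basis_endo[OF transvection[simplified], of "fmult wX wY" wY "fmult wX (finv wY)" wY] by simp
  then show ?case using transvection by (simp add: free_basis_def endo_fmult)
next
  case (inverse u v)
  have e: "endo (finv wX) wY (finv wX) = wX" "endo (finv wX) wY wY = wY"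
    by (simp_all add: endo_letter_def gx_def gy_def fmult_def finv_def inv_letter_def)
  then have "free_basis (endo u v (finv wX)) (endo u v wY)"
    using free_basis_endo[OF inverse[simplified], of "finv wX" wY "finv wX" wY] by simp
  then show ?case using inverse by (simp add: free_basis_def endo_finv)
next
  case (conjugation g u v)
  then show ?case by (simp add: free_basis_conjugate)
qed

lemma nielsen_moves_free_basis:
  "nielsen_move\<^sup>*\<^sup>* p q \<Longrightarrow> free_basis (fst p) (snd p) \<Longrightarrow> free_basis (fst q) (snd q)"
  by (induction rule: rtranclp_induct) (auto dest: nielsen_move_free_basis)

lemma free_basis_inj:
  "free_basis u v \<Longrightarrow> reduced w \<Longrightarrow> reduced w' \<Longrightarrow> endo u v w = endo u v w' \<Longrightarrow>
    w = w'"
  by (auto simp: free_basis_def bij_betw_def inj_on_def)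

lemma free_basis_nonempty:
  assumes B: "free_basis u v"
  shows "u \<noteq> []" "v \<noteq> []"
proof -
  have "endo u v wX \<noteq> endo u v []" "endo u v wY \<noteq> endo u v []"
    using free_basis_inj[OF B, of wX "[]"] free_basis_inj[OF B, of wY "[]"] by auto
  then show "u \<noteq> []" "v \<noteq> []"
    using B by (auto simp: free_basis_def)
qed

lemma AK_invariant_letters:
  assumes n: "n \<ge> 1" and s: "snd p \<noteq> snd q"
  shows "AK_invariant n [p] [q]"
proof -
  have A: "AK_invariant n [p] [q]" if "snd p = False" "snd q = True" for p q
  proof -
    have p: "[p] = wX \<or> [p] = finv wX" using that
      by (cases p) (auto simp: gx_def finv_def inv_letter_def)
    have q: "[q] = wY \<or> [q] = finv wY" using that
      by (cases q) (auto simp: gy_def finv_def inv_letter_def)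
    have "AK_invariant n wX wY" by (rule AK_invariant_gens)
    then show ?thesis using p q AK_invariant_finv_left[OF n, of wX wY] AK_invariant_finv_right[OF n, of wX wY]
      AK_invariant_finv_right[OF n, of "finv wX" wY] by auto
  qed
  show ?thesis
  proof (cases "snd p")
    case True
    then have "snd q = False" using s by simp
    then show ?thesis using A[of q p] True AK_invariant_swap[of "[q]" "[p]" n] by simp
  next
    case False
    then show ?thesis using A s by simp
  qed
qed

lemma AK_invariant_short_basis:
  assumes B: "free_basis u v" and l: "length u + length v \<le> 2" and n: "n \<ge> 1"
  shows "AK_invariant n u v"
proof -
  obtain p q where pq: "u = [p]" "v = [q]"
    using l free_basis_nonempty[OF B] by (cases u; cases v) auto
  have "snd p \<noteq> snd q"
  proof
    assume "snd p = snd q"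
    then have "q = p \<or> q = inv_letter p" by (cases p; cases q) (auto simp: inv_letter_def)
    then show False
    proof
      assume "q = p"
      then have "endo u v [gx, inv_letter gy] = endo u v []" using pq
        by (simp add: endo_letter_def gx_def gy_def inv_letter_def fmult_def finv_def)
      then show False using free_basis_inj[OF B, of "[gx, inv_letter gy]" "[]"]
        by (simp add: gx_def gy_def inv_letter_def)
    next
      assume "q = inv_letter p"
      then have "endo u v [gx, gy] = endo u v []" using pq
        by (simp add: endo_letter_def gx_def gy_def fmult_def)
      then show False using free_basis_inj[OF B, of "[gx, gy]" "[]"]
        by (simp add: gx_def gy_def inv_letter_def)
    qed
  qed
  then show ?thesis using AK_invariant_letters[OF n] pq by simp
qed

section \<open>Cancellation in products\<close>

fun inverse_prefix :: "letter list \<Rightarrow> letter list \<Rightarrow> nat" where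
  "inverse_prefix (x # xs) (y # ys) = (if y = inv_letter x then Suc (inverse_prefix xs ys) else 0)"
| "inverse_prefix _ _ = 0"

definition cancellation :: "letter list \<Rightarrow> letter list \<Rightarrow> nat" where
  "cancellation a b = inverse_prefix (rev a) b"

lemma inverse_prefix_le: "inverse_prefix xs ys \<le> length xs \<and> inverse_prefix xs ys \<le> length ys"
  by (induction xs ys rule: inverse_prefix.induct) auto

lemma inverse_prefix_nth: "i < inverse_prefix xs ys \<Longrightarrow> ys ! i = inv_letter (xs ! i)"
proof (induction xs ys arbitrary: i rule: inverse_prefix.induct)
  case (1 x xs y ys)
  then show ?case by (cases i) (auto split: if_splits)
qed auto

lemma inverse_prefix_take:
  "take (Suc (inverse_prefix xs ys')) ys = take (Suc (inverse_prefix xs ys')) ys' \<Longrightarrow>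
    inverse_prefix xs ys = inverse_prefix xs ys'"
proof (induction xs ys' arbitrary: ys rule: inverse_prefix.induct)
  case (1 x xs y ys')
  obtain ys1 where ys: "ys = y # ys1" and t: "take (inverse_prefix (x # xs) (y # ys')) ys1 = take (inverse_prefix (x # xs) (y # ys')) ys'"
    using "1.prems" by (cases ys) auto
  show ?case
  proof (cases "y = inv_letter x")
    case True
    then have "take (Suc (inverse_prefix xs ys')) ys1 = take (Suc (inverse_prefix xs ys')) ys'" using t by simp
    then have "inverse_prefix xs ys1 = inverse_prefix xs ys'" by (rule "1.IH"[OF True])
    then show ?thesis using ys True by simp
  next
    case False
    then show ?thesis using ys by simp
  qed
next
  case ("2_1" ys')
  then show ?case by simp
next
  case ("2_2" x xs)
  then show ?case by (cases ys) auto
qed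

lemma cancellation_le: "cancellation a b \<le> length a" "cancellation a b \<le> length b"
  using inverse_prefix_le[of "rev a" b] by (auto simp: cancellation_def)

lemma fmult_cancellation:
  "reduced a \<Longrightarrow> reduced b \<Longrightarrow> fmult a b = take (length a - cancellation a b) a @ drop (cancellation a b) b"
proof (induction a arbitrary: b rule: rev_induct)
  case Nil then show ?case by (simp add: cancellation_def)
next
  case (snoc x a')
  have ra: "reduced a'" using snoc.prems(1) by (simp add: reduced_append)
  show ?case
  proof (cases b)
    case Nil then show ?thesis using snoc.prems by (simp add: cancellation_def)
  next
    case (Cons y b')
    have rb: "reduced b'" using snoc.prems(2) Cons by (simp add: reduced_Cons)
    show ?thesis
    proof (cases "y = inv_letter x")
      case True
      have c: "cancellation (a' @ [x]) b = Suc (cancellation a' b')" using Cons True by (simp add: cancellation_def)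
      have "fmult (a' @ [x]) b = reduce (a' @ [x, inv_letter x] @ b')"
        using Cons True by (simp add: fmult_def)
      also have "\<dots> = fmult a' b'" unfolding fmult_def by (rule reduce_pair)
      also have "\<dots> = take (length a' - cancellation a' b') a' @ drop (cancellation a' b') b'"
        by (rule snoc.IH[OF ra rb])
      finally show ?thesis using c Cons cancellation_le[of a' b'] by simp
    next
      case False
      have c: "cancellation (a' @ [x]) b = 0" using Cons False by (simp add: cancellation_def)
      have "reduced ((a' @ [x]) @ b)"
        using snoc.prems Cons False by (auto simp: reduced_append)
      then show ?thesis using c by (simp add: fmult_append)
    qed
  qed
qed

lemma length_fmult: "reduced a \<Longrightarrow> reduced b \<Longrightarrow> length (fmult a b) = length a + length b - 2 * cancellation a b"
  using fmult_cancellation[of a b] cancellation_le[of a b] by simp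

lemma cancellation_nth: "i < cancellation a b \<Longrightarrow> b ! i = inv_letter (a ! (length a - Suc i))"
  using inverse_prefix_nth[of i "rev a" b] inverse_prefix_le[of "rev a" b] by (simp add: cancellation_def rev_nth)

lemma cancellation_self:
  assumes r: "reduced a" and ne: "a \<noteq> []"
  shows "2 * cancellation a a < length a"
proof (rule ccontr)
  assume "\<not> 2 * cancellation a a < length a"
  then have c: "length a \<le> 2 * cancellation a a" by simp
  define L where "L = length a"
  have L: "L > 0" using ne by (simp add: L_def)
  show False
  proof (cases "odd L")
    case True
    then obtain j where j: "L = 2 * j + 1" by (metis oddE)
    have "j < cancellation a a" using c j L_def by simp
    then have "a ! j = inv_letter (a ! (L - Suc j))" using cancellation_nth[of j a a] by (simp add: L_def)
    moreover have "L - Suc j = j" using j by simp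
    ultimately show False by simp
  next
    case False
    then obtain j where j: "L = 2 * j" by (metis evenE)
    have j1: "j \<ge> 1" using j L by simp
    have "j - 1 < cancellation a a" using c j L_def j1 by simp
    then have "a ! (j - 1) = inv_letter (a ! (L - Suc (j - 1)))" using cancellation_nth[of "j - 1" a a] by (simp add: L_def)
    moreover have "L - Suc (j - 1) = Suc (j - 1)" using j j1 by simp
    moreover have "a ! Suc (j - 1) \<noteq> inv_letter (a ! (j - 1))"
      using reduced_nth[OF r, of "j - 1"] j j1 L_def by simp
    ultimately show False by (metis inv_letter_inv)
  qed
qed

lemma cancellation_drop:
  assumes m: "m \<le> cancellation a b"
  shows "drop (length a - m) a = finv (take m b)"
proof (rule nth_equalityI)
  have ml: "m \<le> length a" "m \<le> length b" using m cancellation_le[of a b] by auto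
  show "length (drop (length a - m) a) = length (finv (take m b))" using ml by simp
  fix i assume "i < length (drop (length a - m) a)"
  then have i: "i < m" using ml by simp
  have "finv (take m b) ! i = inv_letter (take m b ! (m - Suc i))"
    using i ml by (simp add: finv_def rev_nth)
  also have "\<dots> = inv_letter (b ! (m - Suc i))" using i by simp
  also have "\<dots> = a ! (length a - Suc (m - Suc i))"
    using cancellation_nth[of "m - Suc i" a b] i m by simp
  also have "length a - Suc (m - Suc i) = length a - m + i" using i ml by simp
  finally show "drop (length a - m) a ! i = finv (take m b) ! i" using ml i by simp
qed

lemma cancellation_take:
  assumes "cancellation a z' < K" "take K z = take K z'"
  shows "cancellation a z = cancellation a z'"
proof -
  have "take (Suc (cancellation a z')) z = take (Suc (cancellation a z')) z'"
    using assms by (metis Suc_leI min.absorb_iff1 take_take)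
  then show ?thesis unfolding cancellation_def by (rule inverse_prefix_take)
qed

lemma reduced_half_inverse:
  assumes "reduced b" "length b = 2 * m" "drop m b = finv (take m b)"
  shows "m = 0"
proof -
  have "reduced (finv (finv (take m b)) @ finv (take m b))"
    using assms by (metis append_take_drop_id finv_finv)
  then have "take m b = []" by (metis reduced_finv_append_self finv_finv finv_Nil)
  then show ?thesis using assms(2) by auto
qed

lemma cancellation_overlap:
  assumes r: "reduced a" "reduced b"
    and m: "cancellation a b = m" "cancellation b a = m" "length b = 2 * m" "2 * m \<le> length a"
  obtains b1 b2 z where "b = fmult b1 b2" "a = fmult (fmult (finv b2) z) (finv b1)"
    "reduced b1" "reduced b2" "reduced z" "length (fmult b2 b1) \<le> 2 * m" "length z = length a - 2 * m"
proof -
  define b1 where "b1 = take m b"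
  define b2 where "b2 = drop m b"
  define z where "z = drop m (take (length a - m) a)"
  have tail_a: "drop (length a - m) a = finv b1"
    using cancellation_drop[of m a b] m by (simp add: b1_def)
  have head_a: "take m a = finv b2"
    using cancellation_drop[of m b a] m by (simp add: b2_def take_finv)
  have "take (length a - m) a = take m a @ z"
  proof -
    have "take m (take (length a - m) a) = take m a" using m(4) by (simp add: min_def, arith)
    then show ?thesis unfolding z_def by (metis append_take_drop_id)
  qed
  then have a_eq: "a = (finv b2 @ z) @ finv b1"
    using head_a tail_a by (metis append_take_drop_id)
  have b_eq: "b = b1 @ b2" by (simp add: b1_def b2_def)
  have rb: "reduced b1" "reduced b2" using r(2) b_eq reduced_append by metis+
  have rz: "reduced z" "reduced (finv b2 @ z)" using r(1) a_eq reduced_append by metis+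
  show ?thesis
  proof
    show "b = fmult b1 b2" using b_eq r(2) by (simp add: fmult_append)
    show "a = fmult (fmult (finv b2) z) (finv b1)"
      using a_eq r(1) rz by (simp add: fmult_append reduced_append)
    show "length (fmult b2 b1) \<le> 2 * m"
      using length_fmult_le[of b2 b1] m(3) by (simp add: b1_def b2_def)
    show "length z = length a - 2 * m" using m(4) by (simp add: z_def)
  qed (use rb rz in auto)
qed

section \<open>Nielsen-reduced and minimal bases\<close>

text \<open>Nielsen's condition: in the image of a reduced word, the image of each letter other than
  the first and the last keeps a letter after cancellation with both neighbours.\<close>

definition nielsen_reduced :: "letter list \<Rightarrow> letter list \<Rightarrow> bool" where
  "nielsen_reduced u v \<longleftrightarrow> (\<forall>l l' l''. l' \<noteq> inv_letter l \<longrightarrow> l'' \<noteq> inv_letter l' \<longrightarrow>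
     cancellation (endo_letter u v l) (endo_letter u v l') + cancellation (endo_letter u v l') (endo_letter u v l'') < length (endo_letter u v l'))"

text \<open>For a Nielsen-reduced pair, the first \<open>kept_length u v l w\<close> letters of the image of \<open>l\<close> survive
  in the image of \<open>l # w\<close>, and at least one letter of each letter image survives.\<close>

definition kept_length :: "letter list \<Rightarrow> letter list \<Rightarrow> letter \<Rightarrow> letter list \<Rightarrow> nat" where
  "kept_length u v l w = length (endo_letter u v l)
     - (case w of [] \<Rightarrow> 0 | l'' # _ \<Rightarrow> cancellation (endo_letter u v l) (endo_letter u v l''))"

lemma cancellation_lt_kept_length:
  assumes C: "nielsen_reduced u v" and l: "l'' \<noteq> inv_letter l'" and w: "reduced (l'' # w)"
  shows "cancellation (endo_letter u v l') (endo_letter u v l'') < kept_length u v l'' w"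
proof (cases w)
  case Nil
  have "cancellation (endo_letter u v l') (endo_letter u v l'')
      + cancellation (endo_letter u v l'') (endo_letter u v l'') < length (endo_letter u v l'')"
    using C l unfolding nielsen_reduced_def by (metis inv_letter_neq(2))
  then show ?thesis using Nil by (simp add: kept_length_def)
next
  case (Cons l3 w3)
  have "l3 \<noteq> inv_letter l''" using w Cons by simp
  then have "cancellation (endo_letter u v l') (endo_letter u v l'')
      + cancellation (endo_letter u v l'') (endo_letter u v l3) < length (endo_letter u v l'')"
    using C l unfolding nielsen_reduced_def by blast
  then show ?thesis using Cons by (simp add: kept_length_def)
qed

lemma endo_Cons_prefix:
  assumes ru: "reduced u" "reduced v" and C: "nielsen_reduced u v"
  shows "reduced (l' # w) \<Longrightarrow> \<exists>rest. endo u v (l' # w) = take (kept_length u v l' w) (endo_letter u v l') @ rest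
    \<and> length w \<le> length rest"
proof (induction w arbitrary: l')
  case Nil
  then show ?case using ru by (auto simp: kept_length_def)
next
  case (Cons l'' w')
  have r2: "reduced (l'' # w')" using Cons.prems by (rule reduced_ConsD)
  obtain rest where R: "endo u v (l'' # w') = take (kept_length u v l'' w') (endo_letter u v l'') @ rest"
    and lr: "length w' \<le> length rest" using Cons.IH[OF r2] by blast
  define a where "a = endo_letter u v l'"
  define z' where "z' = endo_letter u v l''"
  define z where "z = endo u v (l'' # w')"
  define K where "K = kept_length u v l'' w'"
  define c where "c = cancellation a z'"
  have K: "K \<le> length z'" by (simp add: K_def kept_length_def z'_def)
  have cK: "c < K"
    using cancellation_lt_kept_length[OF C _ r2] Cons.prems by (simp add: c_def K_def a_def z'_def)
  have cz: "cancellation a z = c"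
    using cancellation_take[of a z' K z] cK R K by (simp add: c_def z_def K_def z'_def)
  have ra: "reduced a" "reduced z" using ru by (simp_all add: a_def z_def)
  have "endo u v (l' # l'' # w') = fmult a z" by (simp add: a_def z_def)
  also have "\<dots> = take (length a - c) a @ drop c z" using fmult_cancellation[OF ra] cz by simp
  also have "drop c z = drop c (take K z') @ rest"
    using R cK K by (simp add: z_def K_def z'_def)
  finally have "endo u v (l' # l'' # w') = take (length a - c) a @ (drop c (take K z') @ rest)" .
  moreover have "kept_length u v l' (l'' # w') = length a - c"
    by (simp add: kept_length_def a_def c_def z'_def)
  moreover have "length (l'' # w') \<le> length (drop c (take K z') @ rest)"
    using cK K lr by simp
  ultimately show ?case by (metis a_def)
qed

lemma length_le_length_endo:
  assumes ru: "reduced u" "reduced v" and C: "nielsen_reduced u v" and w: "reduced w"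
  shows "length w \<le> length (endo u v w)"
proof (cases w)
  case (Cons l w')
  obtain rest where R: "endo u v (l # w') = take (kept_length u v l w') (endo_letter u v l) @ rest"
    and lr: "length w' \<le> length rest" using endo_Cons_prefix[OF ru C, of l w'] w Cons by blast
  have "kept_length u v l w' \<ge> 1"
    using cancellation_lt_kept_length[OF C _, of l l w'] w Cons by simp
  moreover have "kept_length u v l w' \<le> length (endo_letter u v l)" by (simp add: kept_length_def)
  ultimately show ?thesis using R lr Cons by simp
qed simp

lemma nielsen_reduced_basis_length:
  assumes B: "free_basis u v" and C: "nielsen_reduced u v"
  shows "length u + length v \<le> 2"
proof -
  have ru: "reduced u" "reduced v" using free_basis_reduced[OF B] by auto
  have letter_image: "\<exists>l. endo_letter u v l = [g]" for g
  proof -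
    have "[g] \<in> endo u v ` carrier free_group"
      using B unfolding free_basis_def bij_betw_def by simp
    then obtain w where w: "reduced w" "endo u v w = [g]" by auto
    have "length w \<le> 1" using length_le_length_endo[OF ru C w(1)] w(2) by simp
    moreover have "w \<noteq> []" using w(2) by auto
    ultimately obtain l where "w = [l]" by (cases w) auto
    then have "endo_letter u v l = [g]" using w ru by auto
    then show ?thesis by blast
  qed
  obtain l1 l2 where l: "endo_letter u v l1 = wX" "endo_letter u v l2 = wY"
    using letter_image by metis
  have "snd l1 \<noteq> snd l2"
  proof
    assume "snd l1 = snd l2"
    then have "endo_letter u v l2 = wX \<or> endo_letter u v l2 = finv wX"
      using letter_same_generator[of l1 l2] l by (auto simp: endo_letter_inv_letter)
    then show False using l by (simp add: finv_def gx_def gy_def inv_letter_def)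
  qed
  then show ?thesis using length_endo_letters[of l1 l2 u v] l by simp
qed

definition nielsen_minimal :: "letter list \<Rightarrow> letter list \<Rightarrow> bool" where
  "nielsen_minimal u v \<longleftrightarrow>
     (\<forall>p. nielsen_move\<^sup>*\<^sup>* (u, v) p \<longrightarrow> length u + length v \<le> length (fst p) + length (snd p))"

context
  fixes u v :: "letter list"
  assumes B: "free_basis u v" and M: "nielsen_minimal u v"
begin

lemma minimal_length_le:
  "nielsen_move\<^sup>*\<^sup>* (u, v) (a, b) \<Longrightarrow> length u + length v \<le> length a + length b"
  using M unfolding nielsen_minimal_def by fastforce

text \<open>Otherwise one of the transvections \<open>(A, B) \<mapsto> (A B, B)\<close>, \<open>(A, B) \<mapsto> (A, A B)\<close> would
  shorten the basis.\<close>

lemma minimal_half_cancellation: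
  assumes s: "snd l \<noteq> snd l'"
  shows "2 * cancellation (endo_letter u v l) (endo_letter u v l') \<le> length (endo_letter u v l')"
    "2 * cancellation (endo_letter u v l) (endo_letter u v l') \<le> length (endo_letter u v l)"
proof -
  let ?A = "endo_letter u v l" and ?B = "endo_letter u v l'"
  have r: "reduced ?A" "reduced ?B" using free_basis_reduced[OF B] by simp_all
  have c: "nielsen_move\<^sup>*\<^sup>* (u, v) (?A, ?B)" by (rule nielsen_letter_images[OF s])
  then have "nielsen_move\<^sup>*\<^sup>* (u, v) (fmult ?A ?B, ?B)"
    by (simp add: rtranclp.rtrancl_into_rtrancl nielsen_move.transvection)
  then have first: "length u + length v \<le> length (fmult ?A ?B) + length ?B" by (rule minimal_length_le)
  have "nielsen_move\<^sup>*\<^sup>* (u, v) (?A, fmult ?A ?B)" using c nielsen_mult_left[OF r] by (meson rtranclp_trans)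
  then have second: "length u + length v \<le> length ?A + length (fmult ?A ?B)" by (rule minimal_length_le)
  show "2 * cancellation ?A ?B \<le> length ?B" "2 * cancellation ?A ?B \<le> length ?A"
    using first second length_endo_letters[OF s, of u v] length_fmult[OF r] cancellation_le[of ?A ?B] by linarith+
qed

lemma minimal_cancellation_le:
  assumes "l' \<noteq> inv_letter l"
  shows "2 * cancellation (endo_letter u v l) (endo_letter u v l') \<le> length (endo_letter u v l') \<and>
    2 * cancellation (endo_letter u v l) (endo_letter u v l') \<le> length (endo_letter u v l) \<and>
    (l' = l \<longrightarrow> 2 * cancellation (endo_letter u v l) (endo_letter u v l') < length (endo_letter u v l'))"
proof (cases "l' = l")
  case True
  have r: "reduced (endo_letter u v l)" using free_basis_reduced[OF B] by simp
  have "endo_letter u v l \<noteq> []"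
    using free_basis_nonempty[OF B] by (auto simp: endo_letter_def finv_def)
  then show ?thesis using cancellation_self[OF r] True by simp
next
  case False
  then have "snd l \<noteq> snd l'" using letter_same_generator[of l l'] assms by auto
  then show ?thesis using minimal_half_cancellation False by simp
qed

lemma minimal_no_overlap:
  assumes s: "snd l \<noteq> snd l'"
    and m: "cancellation (endo_letter u v l) (endo_letter u v l') = m"
      "cancellation (endo_letter u v l') (endo_letter u v l) = m"
      "length (endo_letter u v l') = 2 * m" "2 * m \<le> length (endo_letter u v l)" "m \<noteq> 0"
  shows False
proof -
  let ?a = "endo_letter u v l" and ?b = "endo_letter u v l'"
  have ru: "reduced u" "reduced v" using free_basis_reduced[OF B] by auto
  obtain b1 b2 z where b: "?b = fmult b1 b2" "?a = fmult (fmult (finv b2) z) (finv b1)"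
    and r: "reduced b1" "reduced b2" "reduced z"
    and len: "length (fmult b2 b1) \<le> 2 * m" "length z = length ?a - 2 * m"
    using cancellation_overlap[of ?a ?b m] m ru by auto
  have "nielsen_move\<^sup>*\<^sup>* (u, v) (?b, ?a)" by (rule nielsen_letter_images) (use s in auto)
  also have "nielsen_move\<^sup>*\<^sup>* \<dots> (conjugate b1 ?b, conjugate b1 (fmult ?b ?a))"
    using r ru by (intro nielsen_conjugate_product) simp_all
  also have "(conjugate b1 ?b, conjugate b1 (fmult ?b ?a)) = (fmult b2 b1, z)"
    unfolding b using r
    by (simp add: conjugate_def fmult_assoc fmult_finv_cancel fmult_cancel_finv fmult_finv_left)
  finally have "length u + length v \<le> length (fmult b2 b1) + length z"
    by (rule minimal_length_le)
  then show False
    using len m length_endo_letters[OF s, of u v] by linarith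
qed

text \<open>If the middle image were cancelled completely, both cancellations would be half of it: for
  \<open>l'' = l\<inverse>\<close> it would be of the form \<open>w w\<inverse>\<close>, and \<open>l'' = l\<close> is excluded by \<open>minimal_no_overlap\<close>.\<close>

lemma minimal_nielsen_reduced: "nielsen_reduced u v"
  unfolding nielsen_reduced_def
proof (intro allI impI, rule ccontr)
  fix l l' l''
  assume n1: "l' \<noteq> inv_letter l" and n2: "l'' \<noteq> inv_letter l'"
  let ?a = "endo_letter u v l" and ?b = "endo_letter u v l'" and ?c = "endo_letter u v l''"
  assume "\<not> cancellation ?a ?b + cancellation ?b ?c < length ?b"
  then have ge: "length ?b \<le> cancellation ?a ?b + cancellation ?b ?c" by simp
  define m where "m = cancellation ?a ?b"
  have m: "cancellation ?b ?c = m" "length ?b = 2 * m" "2 * m \<le> length ?a"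
    using ge minimal_cancellation_le[OF n1] minimal_cancellation_le[OF n2] by (auto simp: m_def)
  have "?b \<noteq> []"
    using free_basis_nonempty[OF B] by (auto simp: endo_letter_def finv_def)
  then have "m \<noteq> 0" using m(2) by (metis length_0_conv mult_0_right)
  have s1: "snd l \<noteq> snd l'"
  proof
    assume "snd l = snd l'"
    then have "l' = l" using letter_same_generator[of l l'] n1 by auto
    then show False using minimal_cancellation_le[OF n1] m(2) by (simp add: m_def)
  qed
  have "snd l' \<noteq> snd l''"
  proof
    assume "snd l' = snd l''"
    then have "l'' = l'" using letter_same_generator[of l' l''] n2 by auto
    then show False using minimal_cancellation_le[OF n2] m(1,2) by simp
  qed
  then have "l'' = l \<or> l'' = inv_letter l" using s1 letter_same_generator[of l l''] by auto
  then show False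
  proof
    assume "l'' = inv_letter l"
    then have "drop m ?b = finv (take m ?b)"
      using cancellation_drop[of m ?b ?c] cancellation_drop[of m ?a ?b] m
      by (simp add: m_def take_finv endo_letter_inv_letter)
    then show False
      using reduced_half_inverse[of ?b m] m(2) \<open>m \<noteq> 0\<close> free_basis_reduced[OF B] by simp
  next
    assume "l'' = l"
    then show False
      using minimal_no_overlap[OF s1 _ _ m(2,3) \<open>m \<noteq> 0\<close>] m(1) by (simp add: m_def)
  qed
qed

end

lemma nielsen_minimal_length: "free_basis u v \<Longrightarrow> nielsen_minimal u v \<Longrightarrow> length u + length v \<le> 2"
  by (rule nielsen_reduced_basis_length[OF _ minimal_nielsen_reduced])

lemma AK_invariant_free_basis:
  assumes n: "n \<ge> 1"
  shows "free_basis u v \<Longrightarrow> AK_invariant n u v"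
proof (induction "length u + length v" arbitrary: u v rule: less_induct)
  case less
  have ru: "reduced u" "reduced v" using less.prems by (auto simp: free_basis_def)
  show ?case
  proof (cases "nielsen_minimal u v")
    case False
    then obtain p where p: "nielsen_move\<^sup>*\<^sup>* (u, v) p" "length (fst p) + length (snd p) < length u + length v"
      by (auto simp: nielsen_minimal_def)
    have "free_basis (fst p) (snd p)" using nielsen_moves_free_basis[OF p(1)] less.prems by simp
    then have "AK_invariant n (fst p) (snd p)" using less.hyps[OF p(2)] by simp
    then show ?thesis using nielsen_moves_AK_invariant[OF p(1) n] ru by simp
  next
    case True
    then show ?thesis
      using AK_invariant_short_basis[OF less.prems _ n] nielsen_minimal_length[OF less.prems] by simp
  qed
qed

theorem proposition7:
  fixes n :: nat and \<phi> :: "letter list \<Rightarrow> letter list"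
  assumes "n > 2" and "\<phi> \<in> Aut_F"
  shows "AC_equiv (\<phi> (fst (AK n)), \<phi> (snd (AK n))) (AK n)"
proof -
  have h: "\<phi> \<in> hom free_group free_group" using assms(2) by (simp add: Aut_F_def iso_def)
  have reduced_AK: "reduced (fst (AK n))" "reduced (snd (AK n))"
    by (simp_all add: AK_relators AK_pair_def)
  have "(\<phi> (fst (AK n)), \<phi> (snd (AK n))) = AK_pair n (\<phi> wX) (\<phi> wY)"
    using hom_eq_endo[OF h reduced_AK(1)] hom_eq_endo[OF h reduced_AK(2)] endo_AK hom_free_group(3)[OF h]
    by simp
  moreover have "AK_invariant n (\<phi> wX) (\<phi> wY)"
    using assms AK_invariant_free_basis free_basis_Aut by simp
  ultimately show ?thesis by (simp add: AK_invariant_def)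
qed

end
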